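(* Let $M=L+S\in\mathbb{R}^{n_1\times n_2}$ where $L$ has rank $r$ and $S$ has support $\Omega$. Let $G\in\mathbb{R}^{n_1\times r_G}$ be a basis matrix such that $L_{\mathrm{new}}:=(I-GG^\top)L$ has rank $r_{\mathrm{new}}<r$, with reduced SVD $L_{\mathrm{new}}=U_{\mathrm{new}}\Sigma_{\mathrm{new}}V_{\mathrm{new}}^\top$. Let $$\Pi=\{[G\ U_{\mathrm{new}}]Y_1^\top+Y_2V_{\mathrm{new}}^\top:\ Y_1\in\mathbb{R}^{n_2\times(r_G+r_{\mathrm{new}})},\ Y_2\in\mathbb{R}^{n_1\times r_{\mathrm{new}}}\}.$$ If $\|\mathcal P_\Omega\mathcal P_\Pi\|\le 1/4$, $\lambda<3/10$, and there is a pair $(W,F)$ of $n_1\times n_2$ matrices (and a matrix $D$) obeying $$U_{\mathrm{new}}V_{\mathrm{new}}^\top+W=\lambda(\mathrm{sgn}(S)+F+\mathcal P_\Omega D)$$ with $\mathcal P_\Pi W=0$, $\|W\|\le 9/10$, $\mathcal P_\Omega F=0$, $\|F\|_\infty\le 9/10$ and $\|\mathcal P_\Omega D\|_F\le 1/4$, then $(L_{\mathrm{new}},S,L^\top G)$ is the unique solution of $$\min_{\tilde L_{\mathrm{new}},\tilde S,\tilde X}\|\tilde L_{\mathrm{new}}\|_*+\lambda\|\tilde S\|_1\ \text{ s.t. }\ \tilde L_{\mathrm{new}}+G\tilde X^\top+\tilde S=M.$$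
   Context: A basis matrix satisfies $G^\top G=I$; $[A\ B]$ is horizontal concatenation. $\mathcal P_\Pi$ is the orthogonal projection (w.r.t. the trace inner product) onto the linear space $\Pi$ of matrices; $\mathcal P_\Omega$ sets to zero all entries with index outside $\Omega$. $\|\mathcal A\|=\sup_{\|X\|_F=1}\|\mathcal A X\|_F$ for a linear operator $\mathcal A$. $\|W\|$ is the spectral norm, $\|F\|_\infty=\max|F_{ij}|$, $\|\cdot\|_F$ Frobenius norm, $\|\cdot\|_*$ nuclear norm, $\|X\|_1=\sum|X_{ij}|$; $\mathrm{sgn}$ is entrywise sign. The variables range over $\tilde L_{\mathrm{new}},\tilde S\in\mathbb{R}^{n_1\times n_2}$, $\tilde X\in\mathbb{R}^{n_2\times r_G}$. *)

theory Defs
  imports "Jordan_Normal_Form.DL_Rank" "Jordan_Normal_Form.Char_Poly" "HOL-Computational_Algebra.Polynomial"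
begin

definition mrank :: "real mat \<Rightarrow> nat" where
  "mrank A = vec_space.rank (dim_row A) A"

definition frob_inner :: "real mat \<Rightarrow> real mat \<Rightarrow> real" where
  "frob_inner A B = (\<Sum>i<dim_row A. \<Sum>j<dim_col A. A $$ (i,j) * B $$ (i,j))"

definition frob_norm :: "real mat \<Rightarrow> real" where
  "frob_norm A = sqrt (frob_inner A A)"

definition l1_norm :: "real mat \<Rightarrow> real" where
  "l1_norm A = (\<Sum>i<dim_row A. \<Sum>j<dim_col A. \<bar>A $$ (i,j)\<bar>)"

definition max_norm :: "real mat \<Rightarrow> real" where
  "max_norm A = Max ({\<bar>A $$ (i,j)\<bar> | i j. i < dim_row A \<and> j < dim_col A} \<union> {0})"

definition vnorm :: "real vec \<Rightarrow> real" where
  "vnorm v = sqrt (v \<bullet> v)"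

definition spec_norm :: "real mat \<Rightarrow> real" where
  "spec_norm A = Sup {vnorm (A *\<^sub>v v) | v. v \<in> carrier_vec (dim_col A) \<and> vnorm v = 1}"

(* nuclear norm: sum of singular values, i.e. of the square roots of the
   eigenvalues (with multiplicity) of A^T A *)
definition nuc_norm :: "real mat \<Rightarrow> real" where
  "nuc_norm A = sum_mset (image_mset sqrt (proots (char_poly (transpose_mat A * A))))"

definition sgn_mat :: "real mat \<Rightarrow> real mat" where
  "sgn_mat A = map_mat sgn A"

definition supp :: "real mat \<Rightarrow> (nat \<times> nat) set" where
  "supp A = {(i,j). i < dim_row A \<and> j < dim_col A \<and> A $$ (i,j) \<noteq> 0}"

definition P_Omega :: "(nat \<times> nat) set \<Rightarrow> real mat \<Rightarrow> real mat" where
  "P_Omega \<Omega> X = mat (dim_row X) (dim_col X) (\<lambda>(i,j). if (i,j) \<in> \<Omega> then X $$ (i,j) else 0)"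

definition proj_onto :: "real mat set \<Rightarrow> real mat \<Rightarrow> real mat" where
  "proj_onto PiS X = (THE Y. Y \<in> PiS \<and> (\<forall>Z\<in>PiS. frob_inner (X - Y) Z = 0))"

definition op_norm :: "nat \<Rightarrow> nat \<Rightarrow> (real mat \<Rightarrow> real mat) \<Rightarrow> real" where
  "op_norm n1 n2 T = Sup {frob_norm (T X) | X. X \<in> carrier_mat n1 n2 \<and> frob_norm X = 1}"

definition hcat :: "real mat \<Rightarrow> real mat \<Rightarrow> real mat" where
  "hcat A B = four_block_mat A B (0\<^sub>m 0 (dim_col A)) (0\<^sub>m 0 (dim_col B))"

definition basis_mat :: "real mat \<Rightarrow> bool" where
  "basis_mat G \<longleftrightarrow> transpose_mat G * G = 1\<^sub>m (dim_col G)"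

end

theory Submission
  imports Defs "HOL-Computational_Algebra.Fundamental_Theorem_Algebra"
begin

text \<open>The triple \<open>(L\<^sub>n\<^sub>e\<^sub>w, S, L\<^sup>T G)\<close> is certified optimal by the dual certificate. Write
  \<open>L\<^sub>n\<^sub>e\<^sub>w = U \<Sigma> V\<^sup>T\<close>; for a feasible \<open>(L', S', X')\<close> put \<open>E = S - S'\<close> and \<open>N = (X' - L\<^sup>T G)\<^sup>T\<close>, so that
  \<open>E = (L' - L\<^sub>n\<^sub>e\<^sub>w) + G N\<close>. Pairing \<open>L'\<close> with \<open>U V\<^sup>T + W\<close> plus a small multiple of the normal
  component \<open>K = P\<^sub>\<Pi>\<^sub>\<bottom>(L' - L\<^sub>n\<^sub>e\<^sub>w)\<close> bounds \<open>\<parallel>L'\<parallel>\<^sub>*\<close> from below, the subgradient inequality of the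
  \<open>\<ell>\<^sub>1\<close> norm bounds \<open>\<parallel>S'\<parallel>\<^sub>1\<close>, and the certificate identity turns the cross terms into
  \<open>\<lambda> \<langle>sgn S + F + P\<^sub>\<Omega> D, E\<rangle>\<close>. As the incoherence bound controls the part of \<open>E\<close> on the support,
  the objective grows by at least \<open>(1/10 - \<lambda>/3) \<parallel>K\<parallel>\<^sub>F + \<lambda>/60 \<parallel>E - P\<^sub>\<Omega> E\<parallel>\<^sub>1\<close>. If it does not
  grow, then \<open>E = 0\<close> and \<open>L' = L\<^sub>n\<^sub>e\<^sub>w - G N\<close>; since \<open>G\<^sup>T U = 0\<close>, a nonzero \<open>N\<close> would strictly increase
  the nuclear norm, hence \<open>X' = L\<^sup>T G\<close>.\<close>

section \<open>Vectors and matrix-vector products\<close>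

lemma sum_mult_square_le:
  fixes f g :: "'a \<Rightarrow> real"
  assumes "finite A"
  shows "(\<Sum>i\<in>A. f i * g i)^2 \<le> (\<Sum>i\<in>A. (f i)^2) * (\<Sum>i\<in>A. (g i)^2)"
proof -
  define a where "a = (\<Sum>i\<in>A. (f i)^2)"
  define b where "b = (\<Sum>i\<in>A. (g i)^2)"
  define c where "c = (\<Sum>i\<in>A. f i * g i)"
  have "0 \<le> (\<Sum>i\<in>A. (b * f i - c * g i)^2)" by (simp add: sum_nonneg)
  also have "\<dots> = (\<Sum>i\<in>A. b*b*(f i)^2 - 2*b*c*(f i * g i) + c*c*(g i)^2)"
    by (rule sum.cong, auto simp: power2_eq_square algebra_simps)
  also have "\<dots> = b*b*a - 2*b*c*c + c*c*b"
    unfolding a_def b_def c_def by (simp add: sum.distrib sum_subtractf sum_distrib_left)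
  finally have "0 \<le> b * (a * b - c * c)" by (simp add: algebra_simps)
  moreover have "b \<ge> 0" unfolding b_def by (simp add: sum_nonneg)
  moreover have "c = 0" if "b = 0"
  proof -
    have "\<forall>i\<in>A. g i = 0" using that assms unfolding b_def by (subst (asm) sum_nonneg_eq_0_iff) auto
    thus ?thesis unfolding c_def by simp
  qed
  ultimately have "c * c \<le> a * b" by (cases "b = 0") (auto simp: zero_le_mult_iff)
  thus ?thesis unfolding a_def b_def c_def by (simp add: power2_eq_square)
qed

lemma sum_mult_le_sqrt:
  fixes f g :: "'a \<Rightarrow> real"
  assumes "finite A"
  shows "(\<Sum>i\<in>A. f i * g i) \<le> sqrt (\<Sum>i\<in>A. (f i)^2) * sqrt (\<Sum>i\<in>A. (g i)^2)"
  using real_sqrt_le_mono[OF sum_mult_square_le[OF assms, of f g]]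
  by (simp add: real_sqrt_mult)

lemma scalar_prod_self_sum: "(v::real vec) \<bullet> v = (\<Sum>i<dim_vec v. (v $ i)^2)"
  by (simp add: scalar_prod_def atLeast0LessThan power2_eq_square)

lemma scalar_prod_self_nonneg: "(v::real vec) \<bullet> v \<ge> 0"
  using conjugate_square_ge_0_vec[of v] by simp

lemma scalar_prod_self_pos: "v \<in> carrier_vec n \<Longrightarrow> v \<noteq> 0\<^sub>v n \<Longrightarrow> (v::real vec) \<bullet> v > 0"
  using conjugate_square_greater_0_vec[of v n] by simp

lemma scalar_prod_eq_sum: "x \<in> carrier_vec n \<Longrightarrow> y \<in> carrier_vec n \<Longrightarrow> x \<bullet> y = (\<Sum>k<n. x $ k * y $ k)"
  by (simp add: scalar_prod_def atLeast0LessThan)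

lemma row_scalar_prod_sum: "A \<in> carrier_mat m n \<Longrightarrow> v \<in> carrier_vec n \<Longrightarrow> i < m \<Longrightarrow>
   row A i \<bullet> v = (\<Sum>k<n. A $$ (i,k) * v $ k)"
  by (simp add: scalar_prod_def atLeast0LessThan)

lemma col_scalar_prod_sum: "A \<in> carrier_mat m n \<Longrightarrow> v \<in> carrier_vec m \<Longrightarrow> j < n \<Longrightarrow>
   col A j \<bullet> v = (\<Sum>k<m. A $$ (k,j) * v $ k)"
  by (simp add: scalar_prod_def atLeast0LessThan)

lemma scalar_prod_add_self: "a \<in> carrier_vec n \<Longrightarrow> b \<in> carrier_vec n \<Longrightarrow>
  (a + b) \<bullet> (a + b) = a \<bullet> a + 2 * (a \<bullet> b) + (b::real vec) \<bullet> b"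
  by (simp add: add_scalar_prod_distrib[of _ n] scalar_prod_add_distrib[of _ n] comm_scalar_prod[of b n a])

lemma scalar_prod_minus_self: "a \<in> carrier_vec n \<Longrightarrow> b \<in> carrier_vec n \<Longrightarrow>
  (a - b) \<bullet> (a - b) = a \<bullet> a - 2 * (a \<bullet> b) + (b::real vec) \<bullet> b"
  by (simp add: minus_scalar_prod_distrib[of _ n] scalar_prod_minus_distrib[of _ n] comm_scalar_prod[of b n a])

lemma mult_mat_vec_zero: "A \<in> carrier_mat m n \<Longrightarrow> A *\<^sub>v 0\<^sub>v n = (0\<^sub>v m :: 'a :: semiring_0 vec)"
  by (intro eq_vecI) auto

lemma zero_mat_mult_vec: "v \<in> carrier_vec n \<Longrightarrow> 0\<^sub>m m n *\<^sub>v v = (0\<^sub>v m :: 'a :: semiring_0 vec)"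
  by (intro eq_vecI) auto

lemma mult_unit_vec:
  fixes A :: "real mat"
  assumes A: "A \<in> carrier_mat m n" and j: "j < n"
  shows "A *\<^sub>v unit_vec n j = col A j"
  using A j by (intro eq_vecI) auto

lemma smult_mat_mult_vec: "A \<in> carrier_mat m n \<Longrightarrow> v \<in> carrier_vec n \<Longrightarrow>
  (k \<cdot>\<^sub>m A) *\<^sub>v v = k \<cdot>\<^sub>v (A *\<^sub>v (v::real vec))"
  by (intro eq_vecI) (auto simp: scalar_prod_def sum_distrib_left mult.assoc)

lemma mult_mat_vec_scalar_prod: "A \<in> carrier_mat m n \<Longrightarrow> x \<in> carrier_vec n \<Longrightarrow> y \<in> carrier_vec m \<Longrightarrow>
  (A *\<^sub>v x) \<bullet> y = x \<bullet> (transpose_mat A *\<^sub>v (y::real vec))"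
  using transpose_vec_mult_scalar[of A m n x y] comm_scalar_prod[of "A *\<^sub>v x" m y]
    comm_scalar_prod[of x n "transpose_mat A *\<^sub>v y"] by auto

lemma orthonormal_cols_isometry:
  assumes U: "U \<in> carrier_mat m q" and UU: "transpose_mat U * U = 1\<^sub>m q" and x: "x \<in> carrier_vec q"
  shows "(U *\<^sub>v x) \<bullet> (U *\<^sub>v x) = x \<bullet> (x :: real vec)"
proof -
  have "(U *\<^sub>v x) \<bullet> (U *\<^sub>v x) = x \<bullet> (transpose_mat U *\<^sub>v (U *\<^sub>v x))"
    by (rule mult_mat_vec_scalar_prod) (use U x in auto)
  also have "transpose_mat U *\<^sub>v (U *\<^sub>v x) = (transpose_mat U * U) *\<^sub>v x"
    by (rule assoc_mult_mat_vec[symmetric]) (use U x in auto)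
  finally show ?thesis using UU x by simp
qed

lemma vnorm_nonneg: "vnorm v \<ge> 0"
  unfolding vnorm_def using scalar_prod_self_nonneg by simp

lemma vnorm_square: "(vnorm v)^2 = v \<bullet> v"
  unfolding vnorm_def using scalar_prod_self_nonneg by simp

lemma scalar_prod_le_vnorm_mult:
  assumes "x \<in> carrier_vec n" "y \<in> carrier_vec n"
  shows "x \<bullet> (y::real vec) \<le> vnorm x * vnorm y"
proof -
  have "x \<bullet> y = (\<Sum>k<n. x $ k * y $ k)" using assms by (rule scalar_prod_eq_sum)
  also have "\<dots> \<le> sqrt (\<Sum>k<n. (x $ k)^2) * sqrt (\<Sum>k<n. (y $ k)^2)" by (rule sum_mult_le_sqrt) auto
  also have "\<dots> = vnorm x * vnorm y" unfolding vnorm_def scalar_prod_self_sum using assms by simp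
  finally show ?thesis .
qed

lemma vnorm_smult:
  assumes "v \<in> carrier_vec n" shows "vnorm (a \<cdot>\<^sub>v v) = \<bar>a\<bar> * vnorm v"
proof -
  have "(a \<cdot>\<^sub>v v) \<bullet> (a \<cdot>\<^sub>v v) = a^2 * (v \<bullet> v)" using assms
    by (simp add: smult_scalar_prod_distrib[of _ n] scalar_prod_smult_distrib[of _ n] power2_eq_square)
  thus ?thesis unfolding vnorm_def by (simp add: real_sqrt_mult)
qed

lemma vnorm_add_le:
  assumes a: "a \<in> carrier_vec n" and b: "b \<in> carrier_vec n"
  shows "vnorm (a + b) \<le> vnorm a + vnorm (b::real vec)"
proof -
  have "(vnorm (a + b))^2 = a \<bullet> a + 2 * (a \<bullet> b) + b \<bullet> b"
    unfolding vnorm_square using scalar_prod_add_self[OF a b] .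
  also have "\<dots> \<le> (vnorm a + vnorm b)^2"
    using scalar_prod_le_vnorm_mult[OF a b] by (simp add: power2_sum vnorm_square)
  finally show ?thesis using vnorm_nonneg by (meson power2_le_imp_le add_nonneg_nonneg)
qed

section \<open>Frobenius inner product and operator norms\<close>

lemma frob_inner_sum_pairs: "A \<in> carrier_mat n m \<Longrightarrow>
  frob_inner A B = (\<Sum>p\<in>{..<n}\<times>{..<m}. A $$ p * B $$ p)"
  unfolding frob_inner_def by (simp add: sum.cartesian_product)

lemma frob_inner_commute: "A \<in> carrier_mat n m \<Longrightarrow> B \<in> carrier_mat n m \<Longrightarrow> frob_inner A B = frob_inner B A"
  unfolding frob_inner_def by (simp add: mult.commute)

lemma frob_inner_add_right: "A \<in> carrier_mat n m \<Longrightarrow> B \<in> carrier_mat n m \<Longrightarrow> C \<in> carrier_mat n m \<Longrightarrow>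
  frob_inner A (B + C) = frob_inner A B + frob_inner A C"
  unfolding frob_inner_def by (simp add: distrib_left sum.distrib)

lemma frob_inner_add_left: "A \<in> carrier_mat n m \<Longrightarrow> B \<in> carrier_mat n m \<Longrightarrow> C \<in> carrier_mat n m \<Longrightarrow>
  frob_inner (B + C) A = frob_inner B A + frob_inner C A"
  unfolding frob_inner_def by (simp add: distrib_right sum.distrib)

lemma frob_inner_minus_right: "A \<in> carrier_mat n m \<Longrightarrow> B \<in> carrier_mat n m \<Longrightarrow> C \<in> carrier_mat n m \<Longrightarrow>
  frob_inner A (B - C) = frob_inner A B - frob_inner A C"
  unfolding frob_inner_def by (simp add: right_diff_distrib sum_subtractf)

lemma frob_inner_minus_left: "A \<in> carrier_mat n m \<Longrightarrow> B \<in> carrier_mat n m \<Longrightarrow> C \<in> carrier_mat n m \<Longrightarrow>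
  frob_inner (B - C) A = frob_inner B A - frob_inner C A"
  unfolding frob_inner_def by (simp add: left_diff_distrib sum_subtractf)

lemma frob_inner_uminus_right: "A \<in> carrier_mat n m \<Longrightarrow> B \<in> carrier_mat n m \<Longrightarrow>
  frob_inner A (- B) = - frob_inner A B"
  unfolding frob_inner_def by (simp add: sum_negf)

lemma frob_inner_smult_left: "A \<in> carrier_mat n m \<Longrightarrow> B \<in> carrier_mat n m \<Longrightarrow>
  frob_inner (c \<cdot>\<^sub>m B) A = c * frob_inner B A"
  unfolding frob_inner_def by (simp add: sum_distrib_left mult_ac)

lemma frob_inner_zero_left: "frob_inner (0\<^sub>m n m) A = 0"
  unfolding frob_inner_def by simp

lemma frob_inner_mult_left:
  assumes A: "A \<in> carrier_mat n m" and C: "C \<in> carrier_mat n k" and D: "D \<in> carrier_mat k m"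
  shows "frob_inner A (C * D) = frob_inner (transpose_mat C * A) D"
proof -
  have "frob_inner A (C * D) = (\<Sum>i<n. \<Sum>j<m. \<Sum>l<k. A $$ (i,j) * C $$ (i,l) * D $$ (l,j))"
    unfolding frob_inner_def using A C D by (simp add: row_scalar_prod_sum sum_distrib_left mult_ac)
  also have "\<dots> = (\<Sum>l<k. \<Sum>j<m. \<Sum>i<n. A $$ (i,j) * C $$ (i,l) * D $$ (l,j))"
    by (subst sum.swap, subst (2) sum.swap, subst sum.swap) (rule refl)
  also have "\<dots> = frob_inner (transpose_mat C * A) D"
    unfolding frob_inner_def using A C D
    by (simp add: row_scalar_prod_sum col_scalar_prod_sum sum_distrib_left mult_ac)
  finally show ?thesis .
qed

lemma frob_inner_mult_right:
  assumes A: "A \<in> carrier_mat n m" and C: "C \<in> carrier_mat n k" and D: "D \<in> carrier_mat k m"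
  shows "frob_inner A (C * D) = frob_inner (A * transpose_mat D) C"
proof -
  have "frob_inner A (C * D) = (\<Sum>i<n. \<Sum>j<m. \<Sum>l<k. A $$ (i,j) * C $$ (i,l) * D $$ (l,j))"
    unfolding frob_inner_def using A C D by (simp add: row_scalar_prod_sum sum_distrib_left mult_ac)
  also have "\<dots> = (\<Sum>i<n. \<Sum>l<k. \<Sum>j<m. A $$ (i,j) * C $$ (i,l) * D $$ (l,j))"
    by (rule sum.cong[OF refl], rule sum.swap)
  also have "\<dots> = frob_inner (A * transpose_mat D) C"
    unfolding frob_inner_def using A C D
    by (simp add: row_scalar_prod_sum col_scalar_prod_sum sum_distrib_left mult_ac)
  finally show ?thesis .
qed

lemma frob_inner_self_nonneg: "frob_inner A A \<ge> 0"
  unfolding frob_inner_def by (intro sum_nonneg) simp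

lemma frob_norm_nonneg: "frob_norm A \<ge> 0"
  unfolding frob_norm_def using frob_inner_self_nonneg by simp

lemma frob_norm_square: "(frob_norm A)^2 = frob_inner A A"
  unfolding frob_norm_def using frob_inner_self_nonneg by simp

lemma frob_inner_self_eq_0:
  assumes A: "A \<in> carrier_mat n m" and "frob_inner A A = 0"
  shows "A = 0\<^sub>m n m"
proof (rule eq_matI)
  fix i j assume "i < dim_row (0\<^sub>m n m)" "j < dim_col (0\<^sub>m n m)"
  moreover have "(\<Sum>p\<in>{..<n}\<times>{..<m}. A $$ p * A $$ p) = 0"
    using assms frob_inner_sum_pairs[OF A, of A] by simp
  hence "\<forall>p\<in>{..<n}\<times>{..<m}. A $$ p * A $$ p = 0" by (subst (asm) sum_nonneg_eq_0_iff) auto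
  ultimately show "A $$ (i,j) = 0\<^sub>m n m $$ (i,j)" by auto
qed (use A in auto)

lemma frob_norm_eq_0: "A \<in> carrier_mat n m \<Longrightarrow> frob_norm A = 0 \<Longrightarrow> A = 0\<^sub>m n m"
  using frob_inner_self_eq_0 frob_inner_self_nonneg unfolding frob_norm_def by simp

lemma frob_inner_le_frob_norm:
  assumes A: "A \<in> carrier_mat n m" and B: "B \<in> carrier_mat n m"
  shows "frob_inner A B \<le> frob_norm A * frob_norm B"
  using sum_mult_le_sqrt[of "{..<n}\<times>{..<m}" "\<lambda>p. A $$ p" "\<lambda>p. B $$ p"]
  unfolding frob_norm_def frob_inner_sum_pairs[OF A] frob_inner_sum_pairs[OF B]
  by (simp add: power2_eq_square)

lemma frob_norm_add_le:
  assumes A: "A \<in> carrier_mat n m" and B: "B \<in> carrier_mat n m"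
  shows "frob_norm (A + B) \<le> frob_norm A + frob_norm B"
proof -
  have "(frob_norm (A + B))^2 = frob_inner A A + 2 * frob_inner A B + frob_inner B B"
    unfolding frob_norm_square using A B
    by (simp add: frob_inner_add_left[of _ n m] frob_inner_add_right[of _ n m] frob_inner_commute[of B n m A])
  also have "\<dots> \<le> (frob_norm A + frob_norm B)^2"
    using frob_inner_le_frob_norm[OF A B] by (simp add: power2_sum frob_norm_square)
  finally show ?thesis using frob_norm_nonneg by (meson power2_le_imp_le add_nonneg_nonneg)
qed

lemma frob_norm_le_add_orthogonal:
  assumes A: "A \<in> carrier_mat n m" and B: "B \<in> carrier_mat n m" and AB: "frob_inner B A = 0"
  shows "frob_norm A \<le> frob_norm (A + B)"
proof -
  have "(frob_norm (A + B))^2 = (frob_norm A)^2 + frob_inner B B"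
    unfolding frob_norm_square using A B AB
    by (simp add: frob_inner_add_left[of _ n m] frob_inner_add_right[of _ n m] frob_inner_commute[of B n m A])
  hence "(frob_norm A)^2 \<le> (frob_norm (A + B))^2" using frob_inner_self_nonneg[of B] by linarith
  thus ?thesis using frob_norm_nonneg by (rule power2_le_imp_le)
qed

lemma frob_norm_smult:
  assumes A: "A \<in> carrier_mat n m" shows "frob_norm (c \<cdot>\<^sub>m A) = \<bar>c\<bar> * frob_norm A"
proof -
  have "frob_inner (c \<cdot>\<^sub>m A) (c \<cdot>\<^sub>m A) = c^2 * frob_inner A A"
    unfolding frob_inner_def using A by (simp add: sum_distrib_left power2_eq_square mult_ac)
  thus ?thesis unfolding frob_norm_def by (simp add: real_sqrt_mult)
qed

lemma frob_norm_uminus: "frob_norm (- A) = frob_norm A"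
  unfolding frob_norm_def frob_inner_def by simp

lemma frob_norm_le_l1_norm:
  assumes A: "A \<in> carrier_mat n m" shows "frob_norm A \<le> l1_norm A"
proof -
  define P where "P = {..<n} \<times> {..<m}"
  define a where "a p = \<bar>A $$ p\<bar>" for p
  have l1: "l1_norm A = (\<Sum>p\<in>P. a p)"
    unfolding l1_norm_def a_def P_def using A by (simp add: sum.cartesian_product)
  have "frob_inner A A = (\<Sum>p\<in>P. a p * a p)"
    unfolding P_def a_def frob_inner_sum_pairs[OF A] by (simp add: abs_mult_self_eq)
  also have "\<dots> \<le> (\<Sum>p\<in>P. a p * (\<Sum>q\<in>P. a q))"
    by (intro sum_mono mult_left_mono) (auto simp: a_def P_def intro: member_le_sum)
  also have "\<dots> = (l1_norm A)^2" by (simp add: l1 sum_distrib_right[symmetric] power2_eq_square)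
  finally show ?thesis
    using l1 real_sqrt_le_mono unfolding frob_norm_def by (fastforce simp: a_def sum_nonneg)
qed

lemma vnorm_mult_mat_vec_le:
  assumes A: "A \<in> carrier_mat m n" and v: "v \<in> carrier_vec n"
  shows "vnorm (A *\<^sub>v v) \<le> frob_norm A * vnorm v"
proof -
  have "(vnorm (A *\<^sub>v v))^2 = (\<Sum>i<m. (\<Sum>k<n. A $$ (i,k) * v $ k)^2)"
    unfolding vnorm_square using A v by (simp add: scalar_prod_eq_sum[of _ m] row_scalar_prod_sum power2_eq_square)
  also have "\<dots> \<le> (\<Sum>i<m. (\<Sum>k<n. (A $$ (i,k))^2) * (\<Sum>k<n. (v $ k)^2))"
    by (rule sum_mono, rule sum_mult_square_le) auto
  also have "\<dots> = (frob_norm A * vnorm v)^2"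
    unfolding power_mult_distrib frob_norm_square vnorm_square frob_inner_def
    using A v by (simp add: sum_distrib_right scalar_prod_eq_sum[of _ n] power2_eq_square)
  finally show ?thesis using frob_norm_nonneg vnorm_nonneg
    by (meson mult_nonneg_nonneg power2_le_imp_le)
qed

lemma spec_norm_bound:
  fixes W :: "real mat"
  assumes W: "W \<in> carrier_mat n1 n2" and "spec_norm W \<le> c" and v: "v \<in> carrier_vec n2"
  shows "vnorm (W *\<^sub>v v) \<le> c * vnorm v"
proof -
  define N where "N = {vnorm (W *\<^sub>v u) | u. u \<in> carrier_vec (dim_col W) \<and> vnorm u = 1}"
  have "bdd_above N" unfolding N_def
    by (rule bdd_aboveI[of _ "frob_norm W"]) (use vnorm_mult_mat_vec_le[OF W] W in force)
  hence unit: "vnorm (W *\<^sub>v u) \<le> c" if "u \<in> carrier_vec n2" "vnorm u = 1" for u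
    using cSup_upper[of "vnorm (W *\<^sub>v u)" N] assms(2) that W unfolding spec_norm_def N_def by fastforce
  show ?thesis
  proof (cases "v = 0\<^sub>v n2")
    case True
    thus ?thesis using W by (simp add: mult_mat_vec_zero vnorm_def)
  next
    case False
    have pos: "vnorm v > 0" unfolding vnorm_def using scalar_prod_self_pos[OF v False] by simp
    have "vnorm (W *\<^sub>v ((1 / vnorm v) \<cdot>\<^sub>v v)) \<le> c"
      using unit[of "(1 / vnorm v) \<cdot>\<^sub>v v"] v pos by (simp add: vnorm_smult[OF v])
    thus ?thesis using W v pos by (simp add: mult_mat_vec vnorm_smult[of _ n1] divide_le_eq mult.commute)
  qed
qed

text \<open>The crude bound with constant \<open>C\<close> only ensures that the supremum defining \<open>op_norm\<close> is
  finite.\<close>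

lemma op_norm_bound:
  fixes T :: "real mat \<Rightarrow> real mat"
  assumes "op_norm n1 n2 T \<le> c"
    and T_smult: "\<And>X a. X \<in> carrier_mat n1 n2 \<Longrightarrow> T (a \<cdot>\<^sub>m X) = a \<cdot>\<^sub>m T X"
    and T_carrier: "\<And>X. X \<in> carrier_mat n1 n2 \<Longrightarrow> T X \<in> carrier_mat n1 n2"
    and T_bounded: "\<And>X. X \<in> carrier_mat n1 n2 \<Longrightarrow> frob_norm (T X) \<le> C * frob_norm X"
    and X: "X \<in> carrier_mat n1 n2"
  shows "frob_norm (T X) \<le> c * frob_norm X"
proof -
  define N where "N = {frob_norm (T Y) | Y. Y \<in> carrier_mat n1 n2 \<and> frob_norm Y = 1}"
  have "bdd_above N" unfolding N_def by (rule bdd_aboveI[of _ C]) (use T_bounded in force)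
  hence unit: "frob_norm (T Y) \<le> c" if "Y \<in> carrier_mat n1 n2" "frob_norm Y = 1" for Y
    using cSup_upper[of "frob_norm (T Y)" N] assms(1) that unfolding op_norm_def N_def by fastforce
  show ?thesis
  proof (cases "frob_norm X = 0")
    case True
    hence "T X = 0 \<cdot>\<^sub>m T X" using frob_norm_eq_0[OF X] T_smult[OF X, of 0] X
      by (metis smult_carrier_mat smult_zero_mat zero_carrier_mat)
    thus ?thesis using True frob_norm_smult[OF T_carrier[OF X], of 0] by simp
  next
    case False
    hence pos: "frob_norm X > 0" using frob_norm_nonneg[of X] by simp
    have "frob_norm (T ((1 / frob_norm X) \<cdot>\<^sub>m X)) \<le> c"
      using unit[of "(1 / frob_norm X) \<cdot>\<^sub>m X"] X pos by (simp add: frob_norm_smult[OF X])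
    thus ?thesis using T_smult[OF X] frob_norm_smult[OF T_carrier[OF X]] pos
      by (simp add: divide_le_eq mult.commute)
  qed
qed

section \<open>The spectral theorem for real symmetric matrices\<close>

lemma real_symmetric_eigenvalue_real:
  fixes M :: "real mat"
  assumes M: "M \<in> carrier_mat n n" "transpose_mat M = M"
    and w: "w \<in> carrier_vec n" "w \<noteq> 0\<^sub>v n" and Mw: "map_mat complex_of_real M *\<^sub>v w = z \<cdot>\<^sub>v w"
  shows "Im z = 0"
proof -
  have Mwi: "(\<Sum>j<n. complex_of_real (M $$ (i,j)) * w $ j) = z * w $ i" if "i < n" for i
    using arg_cong[OF Mw, of "\<lambda>v. v $ i"] that w M by (simp add: scalar_prod_def atLeast0LessThan)
  define s where "s = (\<Sum>i<n. \<Sum>j<n. complex_of_real (M $$ (i,j)) * w $ j * cnj (w $ i))"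
  define N where "N = (\<Sum>i<n. (cmod (w $ i))^2)"
  have "s = (\<Sum>i<n. z * w $ i * cnj (w $ i))"
    unfolding s_def by (intro sum.cong refl) (simp add: Mwi flip: sum_distrib_right)
  also have "\<dots> = z * N"
    unfolding N_def of_real_sum sum_distrib_left
    by (intro sum.cong refl) (simp only: mult.assoc complex_norm_square)
  finally have s_eq: "s = z * N" .
  have Msym: "M $$ (i,j) = M $$ (j,i)" if "i < n" "j < n" for i j
    using M that by (metis carrier_matD index_transpose_mat(1))
  have "cnj s = (\<Sum>i<n. \<Sum>j<n. complex_of_real (M $$ (i,j)) * cnj (w $ j) * w $ i)"
    unfolding s_def by simp
  also have "\<dots> = (\<Sum>j<n. \<Sum>i<n. complex_of_real (M $$ (i,j)) * cnj (w $ j) * w $ i)"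
    by (rule sum.swap)
  also have "\<dots> = s" unfolding s_def
    by (intro sum.cong refl) (simp add: Msym mult.commute mult.left_commute)
  finally have "cnj s = s" .
  moreover have "N > 0"
  proof -
    obtain i where "i < n" "w $ i \<noteq> 0" using w by (metis eq_vecI index_zero_vec(1,2) carrier_vecD)
    thus ?thesis unfolding N_def by (intro sum_pos2[of _ i]) auto
  qed
  ultimately have "cnj z = z" using s_eq by (metis complex_cnj_complex_of_real complex_cnj_mult
        mult_cancel_right of_real_eq_0_iff less_irrefl)
  thus ?thesis by (metis cnj.sel(2) neg_equal_zero)
qed

lemma real_symmetric_eigenvector_exists:
  fixes M :: "real mat"
  assumes M: "M \<in> carrier_mat n n" "transpose_mat M = M" and n: "n > 0"
  shows "\<exists>l v. v \<in> carrier_vec n \<and> v \<noteq> 0\<^sub>v n \<and> M *\<^sub>v v = l \<cdot>\<^sub>v v"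
proof -
  define Mc where "Mc = map_mat complex_of_real M"
  have Mc: "Mc \<in> carrier_mat n n" using M unfolding Mc_def by auto
  have "\<not> constant (poly (char_poly Mc))"
    using degree_monic_char_poly[OF Mc] n by (simp add: constant_degree)
  then obtain z where "poly (char_poly Mc) z = 0" using fundamental_theorem_of_algebra by blast
  hence "eigenvalue Mc z" using eigenvalue_root_char_poly[OF Mc] by auto
  then obtain w where w: "w \<in> carrier_vec n" "w \<noteq> 0\<^sub>v n" and Mw: "Mc *\<^sub>v w = z \<cdot>\<^sub>v w"
    unfolding eigenvalue_def eigenvector_def using Mc by auto
  have z: "Im z = 0" using real_symmetric_eigenvalue_real[OF M w Mw[unfolded Mc_def]] .
  have parts: "M *\<^sub>v vec n (\<lambda>i. f (w $ i)) = Re z \<cdot>\<^sub>v vec n (\<lambda>i. f (w $ i))"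
    if f: "f = Re \<or> f = Im" for f
  proof (rule eq_vecI)
    fix i assume "i < dim_vec (Re z \<cdot>\<^sub>v vec n (\<lambda>i. f (w $ i)))"
    hence i: "i < n" by simp
    have "(\<Sum>j<n. complex_of_real (M $$ (i,j)) * w $ j) = z * w $ i"
      using arg_cong[OF Mw, of "\<lambda>v. v $ i"] i w M unfolding Mc_def
      by (simp add: scalar_prod_def atLeast0LessThan)
    hence "f (\<Sum>j<n. complex_of_real (M $$ (i,j)) * w $ j) = f (z * w $ i)" by simp
    thus "(M *\<^sub>v vec n (\<lambda>i. f (w $ i))) $ i = (Re z \<cdot>\<^sub>v vec n (\<lambda>i. f (w $ i))) $ i"
      using f z i M by (auto simp: Re_sum Im_sum scalar_prod_def atLeast0LessThan)
  qed (use M in auto)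
  have "vec n (\<lambda>i. Re (w $ i)) \<noteq> 0\<^sub>v n \<or> vec n (\<lambda>i. Im (w $ i)) \<noteq> 0\<^sub>v n"
  proof (rule ccontr)
    assume "\<not> ?thesis"
    hence "Re (w $ i) = 0 \<and> Im (w $ i) = 0" if "i < n" for i
      using that by (metis index_vec index_zero_vec(1))
    hence "w = 0\<^sub>v n" using w(1) by (intro eq_vecI) (auto simp: complex_eq_iff)
    thus False using w(2) by simp
  qed
  thus ?thesis using parts by (metis vec_carrier)
qed

definition orthonormal_list :: "nat \<Rightarrow> real vec list \<Rightarrow> bool" where
  "orthonormal_list n xs \<longleftrightarrow> set xs \<subseteq> carrier_vec n \<and>
     (\<forall>i<length xs. \<forall>j<length xs. xs!i \<bullet> xs!j = (if i = j then 1 else 0))"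

lemma orthonormal_list_nth_carrier: "orthonormal_list n xs \<Longrightarrow> i < length xs \<Longrightarrow> xs!i \<in> carrier_vec n"
  unfolding orthonormal_list_def by auto

lemma orthogonal_vector_exists:
  assumes qs: "set qs \<subseteq> carrier_vec n" and k: "length qs < n"
  shows "\<exists>v. v \<in> carrier_vec n \<and> v \<noteq> 0\<^sub>v n \<and> (\<forall>i<length qs. qs!i \<bullet> (v::real vec) = 0)"
proof -
  define c where "c i = (if i < length qs then qs!i else 0\<^sub>v n)" for i
  define A where "A = mat\<^sub>r n n (\<lambda>i. if i = length qs then 0\<^sub>v n else c i)"
  have A: "A \<in> carrier_mat n n" unfolding A_def by auto
  have "c i \<in> carrier_vec n" for i using qs nth_mem[of i qs] unfolding c_def by auto
  hence "det A = 0" unfolding A_def by (intro det_row_0[OF k]) auto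
  then obtain v where v: "v \<in> carrier_vec n" "v \<noteq> 0\<^sub>v n" "A *\<^sub>v v = 0\<^sub>v n"
    using det_0_iff_vec_prod_zero[OF A] by blast
  have "qs!i \<bullet> v = 0" if "i < length qs" for i
  proof -
    have "qs!i \<in> carrier_vec n" using qs nth_mem[OF that] by auto
    hence "row A i = qs!i" using that k unfolding A_def c_def by (subst row_mat_of_row_fun) auto
    thus ?thesis using arg_cong[OF v(3), of "\<lambda>x. x $ i"] that k A by simp
  qed
  thus ?thesis using v by blast
qed

lemma normalized_vec:
  assumes v: "v \<in> carrier_vec n" "v \<noteq> 0\<^sub>v n"
  defines "u \<equiv> (1 / sqrt (v \<bullet> v)) \<cdot>\<^sub>v (v::real vec)"
  shows "u \<in> carrier_vec n" "u \<bullet> u = 1" "\<And>x. x \<in> carrier_vec n \<Longrightarrow> x \<bullet> v = 0 \<Longrightarrow> x \<bullet> u = 0"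
proof -
  have vv: "v \<bullet> v > 0" using scalar_prod_self_pos[OF v] .
  show "u \<in> carrier_vec n" unfolding u_def using v by auto
  show "u \<bullet> u = 1" unfolding u_def using v vv
    by (simp add: smult_scalar_prod_distrib[of _ n] scalar_prod_smult_distrib[of _ n] power2_eq_square[symmetric])
  fix x assume "x \<in> carrier_vec n" "x \<bullet> v = 0"
  thus "x \<bullet> u = 0" unfolding u_def using v by (subst scalar_prod_smult_distrib[of _ n]) auto
qed

lemma orthonormal_list_snoc:
  assumes o: "orthonormal_list n qs" and u: "u \<in> carrier_vec n" "u \<bullet> u = 1"
    and qu: "\<forall>i<length qs. qs!i \<bullet> u = 0"
  shows "orthonormal_list n (qs @ [u])"
  unfolding orthonormal_list_def
proof (intro conjI allI impI)
  have uq: "u \<bullet> qs!i = 0" if "i < length qs" for i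
    using qu that comm_scalar_prod[OF u(1) orthonormal_list_nth_carrier[OF o that]] by auto
  show "set (qs @ [u]) \<subseteq> carrier_vec n" using o u unfolding orthonormal_list_def by auto
  fix i j assume "i < length (qs @ [u])" "j < length (qs @ [u])"
  thus "(qs @ [u]) ! i \<bullet> (qs @ [u]) ! j = (if i = j then 1 else 0)"
    using o u qu uq unfolding orthonormal_list_def
    by (cases "i < length qs"; cases "j < length qs") (auto simp: nth_append)
qed

lemma orthonormal_list_extend:
  assumes "orthonormal_list n qs" "length qs \<le> n"
  shows "\<exists>rs. orthonormal_list n (qs @ rs) \<and> length (qs @ rs) = n"
  using assms
proof (induction "n - length qs" arbitrary: qs)
  case 0
  thus ?case by (intro exI[of _ "[]"]) auto
next
  case (Suc d)
  have qs: "set qs \<subseteq> carrier_vec n" using Suc(3) unfolding orthonormal_list_def by auto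
  obtain v where v: "v \<in> carrier_vec n" "v \<noteq> 0\<^sub>v n" "\<forall>i<length qs. qs!i \<bullet> v = 0"
    using orthogonal_vector_exists[OF qs] Suc(2) by (metis zero_less_Suc zero_less_diff)
  define u where "u = (1 / sqrt (v \<bullet> v)) \<cdot>\<^sub>v v"
  note u = normalized_vec[OF v(1,2), folded u_def]
  have "orthonormal_list n (qs @ [u])"
    using orthonormal_list_snoc[OF Suc(3) u(1,2)] u(3) v(3) qs nth_mem by blast
  then obtain rs where "orthonormal_list n ((qs @ [u]) @ rs)" "length ((qs @ [u]) @ rs) = n"
    using Suc(1)[of "qs @ [u]"] Suc(2) by force
  thus ?case by (intro exI[of _ "u # rs"]) auto
qed

lemma orthonormal_list_gram:
  assumes "orthonormal_list n B"
  shows "transpose_mat (mat_of_cols n B) * mat_of_cols n B = 1\<^sub>m (length B)"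
proof (rule eq_matI)
  fix i j assume "i < dim_row (1\<^sub>m (length B))" "j < dim_col (1\<^sub>m (length B))"
  thus "(transpose_mat (mat_of_cols n B) * mat_of_cols n B) $$ (i, j) = 1\<^sub>m (length B) $$ (i, j)"
    using assms orthonormal_list_nth_carrier[OF assms]
    unfolding orthonormal_list_def by (simp add: col_mat_of_cols)
qed auto

lemma orthonormal_basis_gram:
  assumes "orthonormal_list n B" "length B = n"
  shows "mat_of_cols n B * transpose_mat (mat_of_cols n B) = 1\<^sub>m n"
  using mat_mult_left_right_inverse[OF _ _ orthonormal_list_gram[OF assms(1)]] assms by auto

lemma orthonormal_basis_coeff:
  assumes "orthonormal_list n qs" "length qs = n" "j < n" "l < n"
  shows "(\<Sum>i<n. qs!i $ j * qs!i $ l) = (if j = l then 1 else 0)"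
proof -
  have "(mat_of_cols n qs * transpose_mat (mat_of_cols n qs)) $$ (j,l) = (if j = l then 1 else 0)"
    using orthonormal_basis_gram[OF assms(1,2)] assms by simp
  moreover have "(mat_of_cols n qs * transpose_mat (mat_of_cols n qs)) $$ (j,l) = (\<Sum>i<n. qs!i $ j * qs!i $ l)"
    using assms by (simp add: scalar_prod_def atLeast0LessThan mat_of_cols_index)
  ultimately show ?thesis by simp
qed

lemma orthonormal_basis_parseval:
  assumes qs: "orthonormal_list n qs" "length qs = n" and x: "x \<in> carrier_vec n" and y: "y \<in> carrier_vec n"
  shows "(\<Sum>i<n. (x \<bullet> qs!i) * (y \<bullet> qs!i)) = x \<bullet> y"
proof -
  have qi: "qs!i \<in> carrier_vec n" if "i < n" for i using orthonormal_list_nth_carrier[OF qs(1)] that qs(2) by simp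
  have "(\<Sum>i<n. (x \<bullet> qs!i) * (y \<bullet> qs!i)) = (\<Sum>i<n. \<Sum>k<n. \<Sum>l<n. x$k * y$l * (qs!i$k * qs!i$l))"
    using x y qi by (simp add: scalar_prod_eq_sum sum_product mult_ac)
  also have "\<dots> = (\<Sum>k<n. \<Sum>i<n. \<Sum>l<n. x$k * y$l * (qs!i$k * qs!i$l))" by (rule sum.swap)
  also have "\<dots> = (\<Sum>k<n. \<Sum>l<n. x$k * y$l * (\<Sum>i<n. qs!i$k * qs!i$l))"
    by (subst sum.swap) (simp add: sum_distrib_left)
  also have "\<dots> = (\<Sum>k<n. \<Sum>l<n. x$k * y$l * (if k = l then 1 else 0))"
    by (simp add: orthonormal_basis_coeff[OF qs])
  also have "\<dots> = x \<bullet> y" using x y by (simp add: scalar_prod_eq_sum if_distrib[of "\<lambda>z. _ * z"] cong: if_cong)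
  finally show ?thesis .
qed

lemma symmetric_lower_block_eigenvector:
  fixes N :: "real mat"
  assumes N: "N \<in> carrier_mat n n" "transpose_mat N = N" and k: "k < n"
    and block: "\<And>i b. i < k \<Longrightarrow> k \<le> b \<Longrightarrow> b < n \<Longrightarrow> N $$ (i,b) = 0"
  shows "\<exists>\<mu> w. w \<in> carrier_vec n \<and> w \<noteq> 0\<^sub>v n \<and> (\<forall>i<k. w $ i = 0) \<and> N *\<^sub>v w = \<mu> \<cdot>\<^sub>v w"
proof -
  define Nl where "Nl = mat (n-k) (n-k) (\<lambda>(a,b). N $$ (a+k, b+k))"
  have Nl: "Nl \<in> carrier_mat (n-k) (n-k)" "transpose_mat Nl = Nl"
    unfolding Nl_def using N by (auto intro!: eq_matI) (metis carrier_matD index_transpose_mat(1) less_diff_conv)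
  obtain \<mu> w where w: "w \<in> carrier_vec (n-k)" "w \<noteq> 0\<^sub>v (n-k)" "Nl *\<^sub>v w = \<mu> \<cdot>\<^sub>v w"
    using real_symmetric_eigenvector_exists[OF Nl] k by auto
  define w' where "w' = vec n (\<lambda>i. if i < k then 0 else w $ (i-k))"
  have w'c: "w' \<in> carrier_vec n" unfolding w'_def by auto
  have "(N *\<^sub>v w') $ i = (\<mu> \<cdot>\<^sub>v w') $ i" if i: "i < n" for i
  proof -
    have "{0..<n} = {0..<k} \<union> {k..<n}" using k by auto
    hence "(N *\<^sub>v w') $ i = (\<Sum>b\<in>{0..<k} \<union> {k..<n}. N $$ (i,b) * w' $ b)"
      using i N w'c k by (auto simp: scalar_prod_def intro!: sum.cong)
    also have "\<dots> = (\<Sum>b\<in>{k..<n}. N $$ (i,b) * w' $ b)"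
      by (subst sum.union_disjoint) (use k in \<open>auto simp: w'_def\<close>)
    also have "\<dots> = (\<Sum>c<n-k. N $$ (i,c+k) * w $ c)"
      by (rule sum.reindex_bij_witness[of _ "\<lambda>c. c+k" "\<lambda>b. b-k"]) (auto simp: w'_def)
    also have "\<dots> = (\<mu> \<cdot>\<^sub>v w') $ i"
    proof (cases "i < k")
      case True
      thus ?thesis using block i by (simp add: w'_def)
    next
      case False
      have "(\<Sum>c<n-k. N $$ (i,c+k) * w $ c) = (Nl *\<^sub>v w) $ (i-k)"
        using False i w(1) unfolding Nl_def by (simp add: scalar_prod_def atLeast0LessThan)
      thus ?thesis using False i w by (simp add: w'_def)
    qed
    finally show ?thesis .
  qed
  hence "N *\<^sub>v w' = \<mu> \<cdot>\<^sub>v w'" using N w'c by (intro eq_vecI) auto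
  moreover have "w' \<noteq> 0\<^sub>v n"
  proof
    assume w'0: "w' = 0\<^sub>v n"
    have "w $ c = 0" if "c < n - k" for c
      using arg_cong[OF w'0, of "\<lambda>v. v $ (c+k)"] that unfolding w'_def by simp
    hence "w = 0\<^sub>v (n-k)" using w(1) by (intro eq_vecI) auto
    thus False using w(2) by simp
  qed
  moreover have "\<forall>i<k. w' $ i = 0" using k unfolding w'_def by simp
  ultimately show ?thesis using w'c by blast
qed

lemma orthonormal_basis_conj_entry:
  fixes M :: "real mat"
  assumes M: "M \<in> carrier_mat n n" and B: "orthonormal_list n B" "length B = n"
    and a: "a < n" and b: "b < n"
  shows "(transpose_mat (mat_of_cols n B) * M * mat_of_cols n B) $$ (a,b) = B!a \<bullet> (M *\<^sub>v B!b)"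
proof -
  define Q where "Q = mat_of_cols n B"
  have Q: "Q \<in> carrier_mat n n" unfolding Q_def using B by auto
  have colQ: "col Q i = B!i" if "i < n" for i
    unfolding Q_def using that B orthonormal_list_nth_carrier[OF B(1)] by simp
  have "transpose_mat Q * M * Q = transpose_mat Q * (M * Q)" using Q M by (simp add: assoc_mult_mat)
  hence "(transpose_mat Q * M * Q) $$ (a,b) = col Q a \<bullet> col (M * Q) b" using a b Q M by simp
  also have "col (M * Q) b = M *\<^sub>v col Q b" by (rule col_mult2) (use b Q M in auto)
  finally show ?thesis unfolding Q_def[symmetric] using a b colQ by simp
qed


lemma orthonormal_list_snoc_eigenvector:
  fixes M :: "real mat"
  assumes M: "M \<in> carrier_mat n n" and qs: "orthonormal_list n qs"
    and q: "q \<in> carrier_vec n" "q \<noteq> 0\<^sub>v n" "M *\<^sub>v q = \<mu> \<cdot>\<^sub>v q" and orth: "\<forall>i<length qs. qs!i \<bullet> q = 0"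
  shows "\<exists>u. orthonormal_list n (qs @ [u]) \<and> M *\<^sub>v u = \<mu> \<cdot>\<^sub>v u"
proof -
  define u where "u = (1 / sqrt (q \<bullet> q)) \<cdot>\<^sub>v q"
  note u = normalized_vec[OF q(1,2), folded u_def]
  have "orthonormal_list n (qs @ [u])"
    using orthonormal_list_snoc[OF qs u(1,2)] u(3) orth orthonormal_list_nth_carrier[OF qs] by blast
  moreover have "M *\<^sub>v u = \<mu> \<cdot>\<^sub>v u" unfolding u_def using q M
    by (simp add: mult_mat_vec smult_smult_assoc mult.commute)
  ultimately show ?thesis by blast
qed


text \<open>In an orthonormal basis extending the eigenvectors \<open>qs\<close>, the symmetric matrix \<open>M\<close> has a
  zero block next to them, so an eigenvector of the complementary block yields a new eigenvector
  orthogonal to \<open>qs\<close>.\<close>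

lemma orthonormal_eigenvectors_extend:
  fixes M :: "real mat"
  assumes M: "M \<in> carrier_mat n n" "transpose_mat M = M"
    and qs: "orthonormal_list n qs" "length qs < n"
    and eig: "\<forall>i<length qs. M *\<^sub>v (qs!i) = ls!i \<cdot>\<^sub>v qs!i"
  shows "\<exists>q l. orthonormal_list n (qs @ [q]) \<and> M *\<^sub>v q = l \<cdot>\<^sub>v q"
proof -
  obtain rs where B: "orthonormal_list n (qs @ rs)" "length (qs @ rs) = n"
    using orthonormal_list_extend[OF qs(1)] qs(2) by auto
  define Q where "Q = mat_of_cols n (qs @ rs)"
  define N where "N = transpose_mat Q * M * Q"
  have Bi: "(qs @ rs)!i \<in> carrier_vec n" if "i < n" for i
    using orthonormal_list_nth_carrier[OF B(1)] that B(2) by auto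
  have Q: "Q \<in> carrier_mat n n" "transpose_mat Q * Q = 1\<^sub>m n" "Q * transpose_mat Q = 1\<^sub>m n"
    unfolding Q_def using B orthonormal_list_gram[OF B(1)] orthonormal_basis_gram[OF B] by auto
  have N: "N \<in> carrier_mat n n" unfolding N_def using Q M by auto
  note N_entry = orthonormal_basis_conj_entry[OF M(1) B, folded Q_def, folded N_def]
  have symM: "x \<bullet> (M *\<^sub>v y) = (M *\<^sub>v x) \<bullet> y" if "x \<in> carrier_vec n" "y \<in> carrier_vec n" for x y
    using transpose_vec_mult_scalar[OF M(1) that(2) that(1)] M(2) by simp
  have N_sym: "transpose_mat N = N"
    using N Bi N_entry symM M by (intro eq_matI) (auto, metis comm_scalar_prod mult_mat_vec_carrier)
  have N_block: "N $$ (i,b) = 0" if "i < length qs" "length qs \<le> b" "b < n" for i b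
  proof -
    have "N $$ (i,b) = ls!i * ((qs @ rs)!i \<bullet> (qs @ rs)!b)"
      using N_entry[of i b] symM[of "(qs @ rs)!i" "(qs @ rs)!b"] Bi[of i] Bi[of b] eig that B(2)
      by (simp add: smult_scalar_prod_distrib[of _ n] nth_append)
    thus ?thesis using B that unfolding orthonormal_list_def by auto
  qed
  obtain \<mu> w where w: "w \<in> carrier_vec n" "w \<noteq> 0\<^sub>v n" "\<forall>i<length qs. w $ i = 0" "N *\<^sub>v w = \<mu> \<cdot>\<^sub>v w"
    using symmetric_lower_block_eigenvector[OF N N_sym qs(2) N_block] by blast
  have Qw: "Q *\<^sub>v w \<in> carrier_vec n" "transpose_mat Q *\<^sub>v (Q *\<^sub>v w) = w"
    using Q(1,2) w(1) by (auto simp: assoc_mult_mat_vec[symmetric, of _ n n _ n])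
  have "M *\<^sub>v (Q *\<^sub>v w) = (Q * transpose_mat Q) *\<^sub>v (M *\<^sub>v (Q *\<^sub>v w))"
    unfolding Q(3) by (rule one_mult_mat_vec[symmetric]) (use M Qw in auto)
  also have "\<dots> = Q *\<^sub>v (N *\<^sub>v w)" unfolding N_def using Q(1) M w
    by (simp add: assoc_mult_mat_vec[of _ n n _ n])
  finally have "M *\<^sub>v (Q *\<^sub>v w) = \<mu> \<cdot>\<^sub>v (Q *\<^sub>v w)" unfolding w(4) using Q w by (simp add: mult_mat_vec)
  moreover have "Q *\<^sub>v w \<noteq> 0\<^sub>v n"
  proof
    assume "Q *\<^sub>v w = 0\<^sub>v n"
    hence "w = 0\<^sub>v n" using Qw(2) Q(1) by (simp add: mult_mat_vec_zero[of _ n n])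
    thus False using w(2) by simp
  qed
  moreover have "qs!i \<bullet> (Q *\<^sub>v w) = 0" if "i < length qs" for i
  proof -
    have "(transpose_mat Q *\<^sub>v (Q *\<^sub>v w)) $ i = col Q i \<bullet> (Q *\<^sub>v w)" using that qs(2) Q(1) by simp
    moreover have "col Q i = qs!i"
      unfolding Q_def using that qs(2) B(2) Bi[of i] by (simp add: nth_append)
    ultimately show ?thesis using Qw(2) w(3) that by simp
  qed
  ultimately show ?thesis using orthonormal_list_snoc_eigenvector[OF M(1) qs(1) Qw(1)] by blast
qed

lemma real_symmetric_spectral:
  fixes M :: "real mat"
  assumes M: "M \<in> carrier_mat n n" "transpose_mat M = M"
  shows "\<exists>qs ls. orthonormal_list n qs \<and> length qs = n \<and> length ls = n \<and>
           (\<forall>i<n. M *\<^sub>v (qs!i) = ls!i \<cdot>\<^sub>v qs!i)"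
proof -
  have "\<exists>qs ls. orthonormal_list n qs \<and> length qs = k \<and> length ls = k \<and> (\<forall>i<k. M *\<^sub>v (qs!i) = ls!i \<cdot>\<^sub>v qs!i)"
    if "k \<le> n" for k
    using that
  proof (induction k)
    case 0
    show ?case by (intro exI[of _ "[]"]) (auto simp: orthonormal_list_def)
  next
    case (Suc k)
    then obtain qs ls where IH: "orthonormal_list n qs" "length qs = k" "length ls = k"
      "\<forall>i<k. M *\<^sub>v (qs!i) = ls!i \<cdot>\<^sub>v qs!i" by auto
    obtain q l where ql: "orthonormal_list n (qs @ [q])" "M *\<^sub>v q = l \<cdot>\<^sub>v q"
      using orthonormal_eigenvectors_extend[OF M IH(1), of ls] IH Suc(2) by auto
    show ?case
    proof (intro exI[of _ "qs @ [q]"] exI[of _ "ls @ [l]"] conjI allI impI)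
      fix i assume "i < Suc k"
      thus "M *\<^sub>v (qs @ [q]) ! i = (ls @ [l]) ! i \<cdot>\<^sub>v (qs @ [q]) ! i"
        using IH ql by (cases "i < k") (auto simp: nth_append)
    qed (use IH ql in auto)
  qed
  thus ?thesis by blast
qed

section \<open>Matrices with orthonormal columns\<close>

lemma orthonormal_cols_scalar_prod:
  fixes V :: "real mat"
  assumes V: "V \<in> carrier_mat n r" and VV: "transpose_mat V * V = 1\<^sub>m r" and "i < r" "j < r"
  shows "col V i \<bullet> col V j = (if i = j then 1 else 0)"
proof -
  have "(transpose_mat V * V) $$ (i,j) = col V i \<bullet> col V j" using V assms(3,4) by simp
  thus ?thesis using VV assms(3,4) by simp
qed

lemma orthonormal_cols_dim_le:
  fixes V :: "real mat"
  assumes V: "V \<in> carrier_mat n r" and VV: "transpose_mat V * V = 1\<^sub>m r"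
  shows "r \<le> n"
proof (rule ccontr)
  assume "\<not> r \<le> n"
  moreover have "set (rows V) \<subseteq> carrier_vec r" using V by (auto simp: rows_def)
  ultimately obtain x where x: "x \<in> carrier_vec r" "x \<noteq> 0\<^sub>v r" "\<forall>i<n. rows V ! i \<bullet> x = 0"
    using orthogonal_vector_exists[of "rows V" r] V by auto
  have "V *\<^sub>v x = 0\<^sub>v n" using V x by (intro eq_vecI) auto
  hence "(transpose_mat V * V) *\<^sub>v x = 0\<^sub>v r"
    using V x by (simp add: assoc_mult_mat_vec[of _ r n _ r] mult_mat_vec_zero[of _ r n])
  thus False using VV x by simp
qed

lemma orthonormal_list_cols:
  fixes V :: "real mat"
  assumes V: "V \<in> carrier_mat n r" and VV: "transpose_mat V * V = 1\<^sub>m r"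
  shows "orthonormal_list n (cols V)"
  unfolding orthonormal_list_def using V cols_dim[of V] orthonormal_cols_scalar_prod[OF V VV] by auto

lemma orthonormal_cols_transpose_mult_col:
  fixes V :: "real mat"
  assumes V: "V \<in> carrier_mat n r" and VV: "transpose_mat V * V = 1\<^sub>m r" and j: "j < r"
  shows "transpose_mat V *\<^sub>v col V j = unit_vec r j"
  using V j orthonormal_cols_scalar_prod[OF V VV] by (intro eq_vecI) auto

lemma diagonal_mult_unit_vec:
  fixes S :: "real mat"
  assumes S: "S \<in> carrier_mat r r" and S_diag: "\<forall>i<r. \<forall>j<r. i \<noteq> j \<longrightarrow> S $$ (i,j) = 0" and j: "j < r"
  shows "S *\<^sub>v unit_vec r j = S $$ (j,j) \<cdot>\<^sub>v unit_vec r j"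
  using S S_diag j by (intro eq_vecI) (auto simp: mult_unit_vec)

lemma orthonormal_cols_add_perp_norm:
  fixes U V Z :: "real mat"
  assumes U: "U \<in> carrier_mat n1 q" and V: "V \<in> carrier_mat n2 q" and Z: "Z \<in> carrier_mat n1 n2"
    and UU: "transpose_mat U * U = 1\<^sub>m q" and UZ: "transpose_mat U * Z = 0\<^sub>m q n2"
    and v: "v \<in> carrier_vec n2"
  shows "((U * transpose_mat V + Z) *\<^sub>v v) \<bullet> ((U * transpose_mat V + Z) *\<^sub>v v)
         = (transpose_mat V *\<^sub>v v) \<bullet> (transpose_mat V *\<^sub>v v) + (Z *\<^sub>v v) \<bullet> (Z *\<^sub>v v)"
proof -
  define x where "x = transpose_mat V *\<^sub>v v"
  have x: "x \<in> carrier_vec q" unfolding x_def using V v by auto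
  have "(U * transpose_mat V + Z) *\<^sub>v v = U *\<^sub>v x + Z *\<^sub>v v"
    unfolding x_def using U V Z v
    by (simp add: add_mult_distrib_mat_vec[of _ n1 n2] assoc_mult_mat_vec[of _ n1 q _ n2])
  moreover have "(U *\<^sub>v x) \<bullet> (Z *\<^sub>v v) = 0"
    using U Z x v UZ by (simp add: mult_mat_vec_scalar_prod[of _ n1 q] zero_mat_mult_vec
        flip: assoc_mult_mat_vec[of _ q n1 _ n2])
  ultimately show ?thesis
    using scalar_prod_add_self[of "U *\<^sub>v x" n1 "Z *\<^sub>v v"] U x Z v orthonormal_cols_isometry[OF U UU x]
    unfolding x_def by simp
qed

lemma orthonormal_cols_pythagoras:
  fixes V :: "real mat"
  assumes V: "V \<in> carrier_mat n q" and VV: "transpose_mat V * V = 1\<^sub>m q" and v: "v \<in> carrier_vec n"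
  shows "(transpose_mat V *\<^sub>v v) \<bullet> (transpose_mat V *\<^sub>v v)
         + (v - V *\<^sub>v (transpose_mat V *\<^sub>v v)) \<bullet> (v - V *\<^sub>v (transpose_mat V *\<^sub>v v)) = v \<bullet> v"
proof -
  define x where "x = transpose_mat V *\<^sub>v v"
  have x: "x \<in> carrier_vec q" unfolding x_def using V v by auto
  have "v \<bullet> (V *\<^sub>v x) = x \<bullet> x"
    using comm_scalar_prod[of v n "V *\<^sub>v x"] V v x mult_mat_vec_scalar_prod[of V n q x v]
    unfolding x_def by simp
  thus ?thesis unfolding x_def[symmetric]
    using scalar_prod_minus_self[of v n "V *\<^sub>v x"] V v x orthonormal_cols_isometry[OF V VV x] by simp
qed

lemma orthonormal_cols_compl_proj:
  fixes H :: "real mat"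
  assumes H: "H \<in> carrier_mat n p" and HH: "transpose_mat H * H = 1\<^sub>m p"
  shows "transpose_mat H * (1\<^sub>m n - H * transpose_mat H) = 0\<^sub>m p n"
        "(1\<^sub>m n - H * transpose_mat H) * H = 0\<^sub>m n p"
proof -
  have "transpose_mat H * (H * transpose_mat H) = (transpose_mat H * H) * transpose_mat H"
    using H by (simp add: assoc_mult_mat[of _ p n H p])
  hence "transpose_mat H * (1\<^sub>m n - H * transpose_mat H) = transpose_mat H - transpose_mat H"
    using H HH by (subst mult_minus_distrib_mat[of _ p n]) auto
  thus "transpose_mat H * (1\<^sub>m n - H * transpose_mat H) = 0\<^sub>m p n"
    using H by (simp add: minus_r_inv_mat)
  have "(H * transpose_mat H) * H = H" using H HH by (simp add: assoc_mult_mat[of H n p])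
  hence "(1\<^sub>m n - H * transpose_mat H) * H = H - H"
    using H by (subst minus_mult_distrib_mat[of _ n n]) auto
  thus "(1\<^sub>m n - H * transpose_mat H) * H = 0\<^sub>m n p"
    using H by (simp add: minus_r_inv_mat)
qed

lemma svd_left_annihilator:
  fixes A U Sig V :: "real mat"
  assumes A: "A \<in> carrier_mat p n1" and U: "U \<in> carrier_mat n1 q" and Sig: "Sig \<in> carrier_mat q q"
    and V: "V \<in> carrier_mat n2 q" and VV: "transpose_mat V * V = 1\<^sub>m q"
    and Sig_diag: "\<forall>i<q. \<forall>j<q. i \<noteq> j \<longrightarrow> Sig $$ (i,j) = 0" and Sig_pos: "\<forall>i<q. Sig $$ (i,i) \<noteq> 0"
    and AL: "A * (U * Sig * transpose_mat V) = 0\<^sub>m p n2"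
  shows "A * U = 0\<^sub>m p q"
proof -
  define B where "B = A * U"
  have B: "B \<in> carrier_mat p q" unfolding B_def using A U by auto
  have "B * Sig = A * (U * Sig * transpose_mat V) * V"
    unfolding B_def using A U Sig V VV
    by (simp add: assoc_mult_mat[of _ p n1 _ q _ q] assoc_mult_mat[of _ p n1 _ n2 _ q]
        assoc_mult_mat[of _ n1 q _ n2 _ q])
  hence BS: "B * Sig = 0\<^sub>m p q" using AL V by simp
  have "B = 0\<^sub>m p q"
  proof (rule eq_matI)
    fix a j assume "a < dim_row (0\<^sub>m p q)" "j < dim_col (0\<^sub>m p q)"
    hence aj: "a < p" "j < q" by auto
    have "(B * Sig) $$ (a,j) = (\<Sum>k<q. B $$ (a,k) * Sig $$ (k,j))"
      using B Sig aj by (simp add: scalar_prod_def atLeast0LessThan)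
    also have "\<dots> = B $$ (a,j) * Sig $$ (j,j)"
      by (subst sum.remove[of _ j]) (use aj Sig_diag in \<open>auto intro!: sum.neutral\<close>)
    finally show "B $$ (a,j) = 0\<^sub>m p q $$ (a,j)" using BS aj Sig_pos by simp
  qed (use B in auto)
  thus ?thesis unfolding B_def .
qed

lemma compl_proj_svd_orthogonal:
  fixes G L U Sig V :: "real mat"
  assumes G: "G \<in> carrier_mat n1 p" and GG: "transpose_mat G * G = 1\<^sub>m p" and L: "L \<in> carrier_mat n1 n2"
    and U: "U \<in> carrier_mat n1 q" and Sig: "Sig \<in> carrier_mat q q"
    and V: "V \<in> carrier_mat n2 q" and VV: "transpose_mat V * V = 1\<^sub>m q"
    and Sig_diag: "\<forall>i<q. \<forall>j<q. i \<noteq> j \<longrightarrow> Sig $$ (i,j) = 0" and Sig_pos: "\<forall>i<q. Sig $$ (i,i) \<noteq> 0"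
    and svd: "(1\<^sub>m n1 - G * transpose_mat G) * L = U * Sig * transpose_mat V"
  shows "transpose_mat G * U = 0\<^sub>m p q"
proof (rule svd_left_annihilator[OF _ U Sig V VV Sig_diag Sig_pos])
  have "transpose_mat G * ((1\<^sub>m n1 - G * transpose_mat G) * L)
      = (transpose_mat G * (1\<^sub>m n1 - G * transpose_mat G)) * L"
    by (rule assoc_mult_mat[symmetric]) (use G L in auto)
  thus "transpose_mat G * (U * Sig * transpose_mat V) = 0\<^sub>m p n2"
    using orthonormal_cols_compl_proj(1)[OF G GG] L unfolding svd by simp
qed (use G in auto)

lemma compl_proj_add_proj:
  fixes G L :: "real mat"
  assumes G: "G \<in> carrier_mat n p" and L: "L \<in> carrier_mat n m"
  shows "(1\<^sub>m n - G * transpose_mat G) * L + G * transpose_mat (transpose_mat L * G) = L"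
proof -
  have "G * transpose_mat (transpose_mat L * G) = G * transpose_mat G * L"
    using G L by (simp add: transpose_mult[of _ m n _ p] assoc_mult_mat[of G n p _ n _ m])
  moreover have "(1\<^sub>m n - G * transpose_mat G) * L = L - G * transpose_mat G * L"
    using G L by (simp add: minus_mult_distrib_mat[of _ n n])
  ultimately show ?thesis using G L by (intro eq_matI) auto
qed

section \<open>The nuclear norm\<close>

lemma proots_prod_linear_factors: "proots (\<Prod>l\<leftarrow>ls. [:- l, 1:]) = mset (ls :: real list)"
proof (induction ls)
  case (Cons a ls)
  have "(\<Prod>l\<leftarrow>ls. [:- l, 1:]) \<noteq> 0" by (auto simp: prod_list_zero_iff)
  hence "proots ([:-a,1:] * (\<Prod>l\<leftarrow>ls. [:-l,1:])) = proots [:-a,1:] + proots (\<Prod>l\<leftarrow>ls. [:-l,1:])"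
    by (intro proots_mult) auto
  thus ?case using Cons proots_linear_factor[of "-a"] by simp
qed simp

lemma char_poly_orthonormal_eigenbasis:
  fixes M :: "real mat"
  assumes M: "M \<in> carrier_mat n n" and qs: "orthonormal_list n qs" "length qs = n" and ls: "length ls = n"
    and eig: "\<forall>i<n. M *\<^sub>v (qs!i) = ls!i \<cdot>\<^sub>v qs!i"
  shows "char_poly M = (\<Prod>l\<leftarrow>ls. [:- l, 1:])"
proof -
  define Q where "Q = mat_of_cols n qs"
  define D where "D = mat n n (\<lambda>(i,j). if i = j then ls!i else 0)"
  have Q: "Q \<in> carrier_mat n n" "transpose_mat Q * Q = 1\<^sub>m n" "Q * transpose_mat Q = 1\<^sub>m n"
    unfolding Q_def using qs orthonormal_list_gram[OF qs(1)] orthonormal_basis_gram[OF qs] by auto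
  have D: "D \<in> carrier_mat n n" unfolding D_def by auto
  have MQ: "M * Q = Q * D"
  proof (rule eq_matI)
    fix i j assume "i < dim_row (Q * D)" "j < dim_col (Q * D)"
    hence i: "i < n" and j: "j < n" using Q D by auto
    have qj: "qs!j \<in> carrier_vec n" using orthonormal_list_nth_carrier[OF qs(1)] j qs(2) by auto
    have "(M * Q) $$ (i,j) = (M *\<^sub>v qs!j) $ i" using i j M Q qs(2) qj unfolding Q_def by simp
    also have "\<dots> = Q $$ (i,j) * ls!j" using eig j i qj qs(2) unfolding Q_def by (simp add: mat_of_cols_index)
    also have "\<dots> = (\<Sum>k<n. Q $$ (i,k) * D $$ (k,j))"
      by (subst sum.remove[of _ j]) (use j i in \<open>auto simp: D_def intro!: sum.neutral\<close>)
    also have "\<dots> = (Q * D) $$ (i,j)" using i j Q D by (simp add: scalar_prod_def atLeast0LessThan)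
    finally show "(M * Q) $$ (i,j) = (Q * D) $$ (i,j)" .
  qed (use M Q D in auto)
  have "M = (M * Q) * transpose_mat Q" using Q M by (simp add: assoc_mult_mat[of M n n Q n])
  hence "similar_mat_wit M D Q (transpose_mat Q)"
    unfolding similar_mat_wit_def Let_def MQ using M Q D by auto
  hence "char_poly M = char_poly D" by (intro char_poly_similar) (auto simp: similar_mat_def)
  also have "\<dots> = (\<Prod>a\<leftarrow>diag_mat D. [:- a, 1:])"
    by (rule char_poly_upper_triangular[OF D]) (auto simp: D_def upper_triangular_def)
  also have "diag_mat D = ls" unfolding diag_mat_def using ls by (intro nth_equalityI) (auto simp: D_def)
  finally show ?thesis .
qed

lemma nuc_norm_orthonormal_eigenbasis:
  fixes A :: "real mat"
  assumes A: "A \<in> carrier_mat m n" and qs: "orthonormal_list n qs" "length qs = n" and ls: "length ls = n"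
    and eig: "\<forall>i<n. (transpose_mat A * A) *\<^sub>v (qs!i) = ls!i \<cdot>\<^sub>v qs!i"
  shows "nuc_norm A = sum_list (map sqrt ls)"
proof -
  have AA: "transpose_mat A * A \<in> carrier_mat n n" using A by auto
  have "nuc_norm A = sum_mset (image_mset sqrt (mset ls))"
    unfolding nuc_norm_def char_poly_orthonormal_eigenbasis[OF AA qs ls eig] proots_prod_linear_factors ..
  thus ?thesis by (metis mset_map sum_mset_sum_list)
qed

lemma nuc_norm_eq_sum_vnorm:
  fixes A :: "real mat"
  assumes A: "A \<in> carrier_mat m n"
  shows "\<exists>qs. orthonormal_list n qs \<and> length qs = n \<and> nuc_norm A = (\<Sum>i<n. vnorm (A *\<^sub>v qs!i))"
proof -
  have "transpose_mat A * A \<in> carrier_mat n n" "transpose_mat (transpose_mat A * A) = transpose_mat A * A"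
    using A by (auto simp: transpose_mult[of _ n m _ n])
  then obtain qs ls where qs: "orthonormal_list n qs" "length qs = n" and ls: "length ls = n"
    and eig: "\<forall>i<n. (transpose_mat A * A) *\<^sub>v (qs!i) = ls!i \<cdot>\<^sub>v qs!i"
    using real_symmetric_spectral by blast
  have ls_eq: "ls!i = (A *\<^sub>v qs!i) \<bullet> (A *\<^sub>v qs!i)" if i: "i < n" for i
  proof -
    have qi: "qs!i \<in> carrier_vec n" using orthonormal_list_nth_carrier[OF qs(1)] i qs(2) by simp
    have "(A *\<^sub>v qs!i) \<bullet> (A *\<^sub>v qs!i) = qs!i \<bullet> ((transpose_mat A * A) *\<^sub>v qs!i)"
      using A qi by (simp add: mult_mat_vec_scalar_prod[of _ m n] assoc_mult_mat_vec[of _ n m _ n])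
    also have "\<dots> = ls!i * (qs!i \<bullet> qs!i)" using eig i qi by (simp add: scalar_prod_smult_distrib[of _ n])
    finally show ?thesis using qs i unfolding orthonormal_list_def by simp
  qed
  have "nuc_norm A = sum_list (map sqrt ls)" by (rule nuc_norm_orthonormal_eigenbasis[OF A qs ls eig])
  also have "\<dots> = (\<Sum>i<n. vnorm (A *\<^sub>v qs!i))"
    using ls ls_eq by (simp add: sum_list_sum_nth atLeast0LessThan vnorm_def)
  finally show ?thesis using qs by blast
qed

lemma svd_gram_mult_col:
  fixes U S V :: "real mat"
  assumes U: "U \<in> carrier_mat m r" and S: "S \<in> carrier_mat r r" and V: "V \<in> carrier_mat n r"
    and UU: "transpose_mat U * U = 1\<^sub>m r" and VV: "transpose_mat V * V = 1\<^sub>m r"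
    and S_diag: "\<forall>i<r. \<forall>j<r. i \<noteq> j \<longrightarrow> S $$ (i,j) = 0" and j: "j < r"
  defines "A \<equiv> U * S * transpose_mat V"
  shows "(transpose_mat A * A) *\<^sub>v col V j = (S $$ (j,j))^2 \<cdot>\<^sub>v col V j"
proof -
  have A: "A \<in> carrier_mat m n" unfolding A_def using U S V by auto
  have "transpose_mat A = transpose_mat (transpose_mat V) * transpose_mat (U * S)"
    unfolding A_def by (rule transpose_mult) (use U S V in auto)
  also have "transpose_mat (U * S) = transpose_mat S * transpose_mat U"
    using U S by (simp add: transpose_mult[of _ m r _ r])
  finally have At: "transpose_mat A = V * transpose_mat S * transpose_mat U"
    using U S V by (simp add: assoc_mult_mat[of V n r _ r _ m])
  have St_diag: "\<forall>i<r. \<forall>j<r. i \<noteq> j \<longrightarrow> transpose_mat S $$ (i,j) = 0" using S S_diag by auto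
  have "A *\<^sub>v col V j = U *\<^sub>v (S *\<^sub>v (transpose_mat V *\<^sub>v col V j))"
    unfolding A_def using U S V j by (simp add: assoc_mult_mat_vec[of _ m r _ n] assoc_mult_mat_vec[of _ r r _ n])
  hence "A *\<^sub>v col V j = S $$ (j,j) \<cdot>\<^sub>v col U j"
    using U S j orthonormal_cols_transpose_mult_col[OF V VV j] diagonal_mult_unit_vec[OF S S_diag j]
      mult_unit_vec[OF U j] by (simp add: mult_mat_vec)
  moreover have "transpose_mat A *\<^sub>v col U j = V *\<^sub>v (transpose_mat S *\<^sub>v (transpose_mat U *\<^sub>v col U j))"
    unfolding At using U S V j by (simp add: assoc_mult_mat_vec[of _ n r _ m] assoc_mult_mat_vec[of _ r r _ m])
  hence "transpose_mat A *\<^sub>v col U j = S $$ (j,j) \<cdot>\<^sub>v col V j"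
    using V S j orthonormal_cols_transpose_mult_col[OF U UU j]
      diagonal_mult_unit_vec[of "transpose_mat S", OF _ St_diag j] mult_unit_vec[OF V j]
    by (simp add: mult_mat_vec)
  ultimately show ?thesis using A U V j
    by (simp add: assoc_mult_mat_vec[of _ n m _ n] mult_mat_vec smult_smult_assoc power2_eq_square)
qed

lemma svd_gram_mult_orthogonal:
  fixes U S V :: "real mat"
  assumes U: "U \<in> carrier_mat m r" and S: "S \<in> carrier_mat r r" and V: "V \<in> carrier_mat n r"
    and x: "x \<in> carrier_vec n" "\<forall>j<r. col V j \<bullet> x = 0"
  defines "A \<equiv> U * S * transpose_mat V"
  shows "(transpose_mat A * A) *\<^sub>v x = 0 \<cdot>\<^sub>v x"
proof -
  have A: "A \<in> carrier_mat m n" unfolding A_def using U S V by auto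
  have "transpose_mat V *\<^sub>v x = 0\<^sub>v r" using V x by (intro eq_vecI) auto
  hence "A *\<^sub>v x = 0\<^sub>v m"
    unfolding A_def using U S V x
    by (simp add: assoc_mult_mat_vec[of _ m r _ n] assoc_mult_mat_vec[of _ r r _ n] mult_mat_vec_zero)
  hence "(transpose_mat A * A) *\<^sub>v x = 0\<^sub>v n"
    using A x by (simp add: assoc_mult_mat_vec[of _ n m _ n] mult_mat_vec_zero[of _ n m])
  thus ?thesis using x by (intro eq_vecI) auto
qed

lemma nuc_norm_svd:
  fixes U S V :: "real mat"
  assumes U: "U \<in> carrier_mat m r" and S: "S \<in> carrier_mat r r" and V: "V \<in> carrier_mat n r"
    and UU: "transpose_mat U * U = 1\<^sub>m r" and VV: "transpose_mat V * V = 1\<^sub>m r"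
    and S_diag: "\<forall>i<r. \<forall>j<r. i \<noteq> j \<longrightarrow> S $$ (i,j) = 0" and S_nonneg: "\<forall>i<r. S $$ (i,i) \<ge> 0"
  shows "nuc_norm (U * S * transpose_mat V) = (\<Sum>j<r. S $$ (j,j))"
proof -
  define A where "A = U * S * transpose_mat V"
  have A: "A \<in> carrier_mat m n" unfolding A_def using U S V by auto
  have r: "r \<le> n" by (rule orthonormal_cols_dim_le[OF V VV])
  obtain rs where qs: "orthonormal_list n (cols V @ rs)" "length (cols V @ rs) = n"
    using orthonormal_list_extend[OF orthonormal_list_cols[OF V VV]] r V by auto
  define ls where "ls = map (\<lambda>j. (S $$ (j,j))^2) [0..<r] @ replicate (n - r) 0"
  have "(transpose_mat A * A) *\<^sub>v ((cols V @ rs)!i) = ls!i \<cdot>\<^sub>v (cols V @ rs)!i" if i: "i < n" for i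
  proof (cases "i < r")
    case True
    thus ?thesis using svd_gram_mult_col[OF U S V UU VV S_diag True] V unfolding A_def
      by (simp add: ls_def nth_append)
  next
    case False
    have "col V j \<bullet> (cols V @ rs)!i = 0" if j: "j < r" for j
    proof -
      have "(cols V @ rs)!j \<bullet> (cols V @ rs)!i = 0"
        using qs i False j r unfolding orthonormal_list_def by auto
      thus ?thesis using j V by (simp add: nth_append)
    qed
    moreover have "(cols V @ rs)!i \<in> carrier_vec n" using orthonormal_list_nth_carrier[OF qs(1)] i qs(2) by simp
    ultimately show ?thesis using svd_gram_mult_orthogonal[OF U S V] False i r V unfolding A_def
      by (simp add: ls_def nth_append)
  qed
  hence "nuc_norm A = sum_list (map sqrt ls)"
    by (intro nuc_norm_orthonormal_eigenbasis[OF A qs]) (use qs r in \<open>auto simp: ls_def\<close>)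
  also have "\<dots> = (\<Sum>j<r. S $$ (j,j))"
    using S_nonneg by (simp add: ls_def interv_sum_list_conv_sum_set_nat atLeast0LessThan sum_list_replicate)
  finally show ?thesis unfolding A_def .
qed

lemma frob_inner_orthonormal_basis:
  fixes A B :: "real mat"
  assumes A: "A \<in> carrier_mat m n" and B: "B \<in> carrier_mat m n"
    and qs: "orthonormal_list n qs" "length qs = n"
  shows "frob_inner B A = (\<Sum>i<n. (B *\<^sub>v qs!i) \<bullet> (A *\<^sub>v qs!i))"
proof -
  have qi: "qs!i \<in> carrier_vec n" if "i < n" for i using orthonormal_list_nth_carrier[OF qs(1)] that qs(2) by simp
  have "(\<Sum>i<n. (B *\<^sub>v qs!i) \<bullet> (A *\<^sub>v qs!i)) = (\<Sum>i<n. \<Sum>r<m. (row B r \<bullet> qs!i) * (row A r \<bullet> qs!i))"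
    using A B qi by (intro sum.cong refl) (simp add: scalar_prod_eq_sum[of _ m])
  also have "\<dots> = (\<Sum>r<m. \<Sum>i<n. (row B r \<bullet> qs!i) * (row A r \<bullet> qs!i))" by (rule sum.swap)
  also have "\<dots> = (\<Sum>r<m. row B r \<bullet> row A r)"
    using A B by (intro sum.cong refl) (simp add: orthonormal_basis_parseval[OF qs])
  also have "\<dots> = frob_inner B A"
    unfolding frob_inner_def using A B by (simp add: scalar_prod_eq_sum[of _ n])
  finally show ?thesis by simp
qed

lemma frob_inner_le_mult_nuc_norm:
  fixes A B :: "real mat"
  assumes A: "A \<in> carrier_mat m n" and B: "B \<in> carrier_mat m n"
    and B_le: "\<forall>v\<in>carrier_vec n. vnorm (B *\<^sub>v v) \<le> c * vnorm v"
  shows "frob_inner B A \<le> c * nuc_norm A"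
proof -
  obtain qs where qs: "orthonormal_list n qs" "length qs = n" "nuc_norm A = (\<Sum>i<n. vnorm (A *\<^sub>v qs!i))"
    using nuc_norm_eq_sum_vnorm[OF A] by blast
  have "frob_inner B A = (\<Sum>i<n. (B *\<^sub>v qs!i) \<bullet> (A *\<^sub>v qs!i))"
    by (rule frob_inner_orthonormal_basis[OF A B qs(1,2)])
  also have "\<dots> \<le> (\<Sum>i<n. c * vnorm (A *\<^sub>v qs!i))"
  proof (rule sum_mono)
    fix i assume "i \<in> {..<n}"
    hence qi: "qs!i \<in> carrier_vec n" "vnorm (qs!i) = 1"
      using qs orthonormal_list_nth_carrier[OF qs(1)] unfolding orthonormal_list_def vnorm_def by auto
    have "(B *\<^sub>v qs!i) \<bullet> (A *\<^sub>v qs!i) \<le> vnorm (B *\<^sub>v qs!i) * vnorm (A *\<^sub>v qs!i)"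
      by (rule scalar_prod_le_vnorm_mult[of _ m]) (use A B qi in auto)
    also have "\<dots> \<le> c * vnorm (A *\<^sub>v qs!i)"
      using mult_right_mono[OF B_le[rule_format, OF qi(1)] vnorm_nonneg] qi by simp
    finally show "(B *\<^sub>v qs!i) \<bullet> (A *\<^sub>v qs!i) \<le> c * vnorm (A *\<^sub>v qs!i)" .
  qed
  finally show ?thesis using qs(3) by (simp add: sum_distrib_left)
qed

lemma frob_inner_le_nuc_norm:
  fixes A B :: "real mat"
  assumes "A \<in> carrier_mat m n" "B \<in> carrier_mat m n" "\<forall>v\<in>carrier_vec n. vnorm (B *\<^sub>v v) \<le> vnorm v"
  shows "frob_inner B A \<le> nuc_norm A"
  using frob_inner_le_mult_nuc_norm[of A m n B 1] assms by simp

lemma frob_inner_svd: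
  fixes U S V :: "real mat"
  assumes U: "U \<in> carrier_mat n1 r" and S: "S \<in> carrier_mat r r" and V: "V \<in> carrier_mat n2 r"
    and UU: "transpose_mat U * U = 1\<^sub>m r" and VV: "transpose_mat V * V = 1\<^sub>m r"
  shows "frob_inner (U * transpose_mat V) (U * S * transpose_mat V) = (\<Sum>j<r. S $$ (j,j))"
proof -
  have "frob_inner (U * transpose_mat V) (U * S * transpose_mat V)
      = frob_inner ((U * transpose_mat V) * V) (U * S)"
    using frob_inner_mult_right[of "U * transpose_mat V" n1 n2 "U * S" r "transpose_mat V"] U S V by simp
  also have "(U * transpose_mat V) * V = U"
    using U V VV by (simp add: assoc_mult_mat[of U n1 r _ n2])
  also have "frob_inner U (U * S) = frob_inner (1\<^sub>m r) S"
    using frob_inner_mult_left[OF U U S] UU by simp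
  also have "\<dots> = (\<Sum>j<r. S $$ (j,j))"
    unfolding frob_inner_def by (simp add: if_distrib[of "\<lambda>x. x * _"] cong: if_cong)
  finally show ?thesis .
qed

lemma certificate_contraction:
  fixes U V Z :: "real mat"
  assumes U: "U \<in> carrier_mat n1 q" and V: "V \<in> carrier_mat n2 q" and Z: "Z \<in> carrier_mat n1 n2"
    and UU: "transpose_mat U * U = 1\<^sub>m q" and VV: "transpose_mat V * V = 1\<^sub>m q"
    and UZ: "transpose_mat U * Z = 0\<^sub>m q n2" and ZV: "Z * V = 0\<^sub>m n1 q"
    and Z_le: "\<And>v. v \<in> carrier_vec n2 \<Longrightarrow> vnorm (Z *\<^sub>v v) \<le> vnorm v"
  shows "\<forall>v\<in>carrier_vec n2. vnorm ((U * transpose_mat V + Z) *\<^sub>v v) \<le> vnorm v"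
proof
  fix v :: "real vec" assume v: "v \<in> carrier_vec n2"
  define y where "y = v - V *\<^sub>v (transpose_mat V *\<^sub>v v)"
  have y: "y \<in> carrier_vec n2" unfolding y_def using v V by auto
  have "Z *\<^sub>v y = Z *\<^sub>v v - (Z * V) *\<^sub>v (transpose_mat V *\<^sub>v v)"
    unfolding y_def using Z V v
    by (simp add: mult_minus_distrib_mat_vec[of _ n1 n2] assoc_mult_mat_vec[of _ n1 n2 _ q])
  hence "Z *\<^sub>v y = Z *\<^sub>v v" using ZV Z V v by (simp add: zero_mat_mult_vec)
  hence "((U * transpose_mat V + Z) *\<^sub>v v) \<bullet> ((U * transpose_mat V + Z) *\<^sub>v v)
      = (transpose_mat V *\<^sub>v v) \<bullet> (transpose_mat V *\<^sub>v v) + (Z *\<^sub>v y) \<bullet> (Z *\<^sub>v y)"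
    using orthonormal_cols_add_perp_norm[OF U V Z UU UZ v] by simp
  also have "\<dots> \<le> (transpose_mat V *\<^sub>v v) \<bullet> (transpose_mat V *\<^sub>v v) + y \<bullet> y"
    using Z_le[OF y] by (simp add: vnorm_def)
  also have "\<dots> = v \<bullet> v" unfolding y_def by (rule orthonormal_cols_pythagoras[OF V VV v])
  finally show "vnorm ((U * transpose_mat V + Z) *\<^sub>v v) \<le> vnorm v" by (simp add: vnorm_def)
qed

lemma certificate_norm_le:
  fixes U V Z :: "real mat"
  assumes U: "U \<in> carrier_mat n1 q" and V: "V \<in> carrier_mat n2 q" and Z: "Z \<in> carrier_mat n1 n2"
    and UU: "transpose_mat U * U = 1\<^sub>m q" and VV: "transpose_mat V * V = 1\<^sub>m q"
    and UZ: "transpose_mat U * Z = 0\<^sub>m q n2" and c: "c \<ge> 0"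
    and Z_le: "\<And>v. v \<in> carrier_vec n2 \<Longrightarrow> vnorm (Z *\<^sub>v v) \<le> c * vnorm v"
  shows "\<forall>v\<in>carrier_vec n2. vnorm ((U * transpose_mat V + Z) *\<^sub>v v) \<le> sqrt (1 + c^2) * vnorm v"
proof
  fix v :: "real vec" assume v: "v \<in> carrier_vec n2"
  have "(Z *\<^sub>v v) \<bullet> (Z *\<^sub>v v) \<le> c^2 * (v \<bullet> v)"
    using power_mono[OF Z_le[OF v] vnorm_nonneg, of 2] by (simp add: power_mult_distrib vnorm_square)
  moreover have "(transpose_mat V *\<^sub>v v) \<bullet> (transpose_mat V *\<^sub>v v) \<le> v \<bullet> v"
    using orthonormal_cols_pythagoras[OF V VV v]
      scalar_prod_self_nonneg[of "v - V *\<^sub>v (transpose_mat V *\<^sub>v v)"] by linarith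
  ultimately have "(vnorm ((U * transpose_mat V + Z) *\<^sub>v v))^2 \<le> (sqrt (1 + c^2) * vnorm v)^2"
    unfolding vnorm_square power_mult_distrib orthonormal_cols_add_perp_norm[OF U V Z UU UZ v]
    by (simp add: algebra_simps)
  thus "vnorm ((U * transpose_mat V + Z) *\<^sub>v v) \<le> sqrt (1 + c^2) * vnorm v"
    using vnorm_nonneg by (meson power2_le_imp_le mult_nonneg_nonneg real_sqrt_ge_zero add_nonneg_nonneg
        zero_le_one zero_le_power2)
qed

lemma sqrt_one_plus_square_gain:
  fixes T c :: real
  assumes T: "T \<ge> 0" and c: "c > 0"
  defines "\<epsilon> \<equiv> c / (T + c)"
  shows "T * sqrt (1 + \<epsilon>^2) < T + \<epsilon> * c"
proof -
  have \<epsilon>: "\<epsilon> > 0" "\<epsilon> * T \<le> c" unfolding \<epsilon>_def using T c by (auto simp: divide_le_eq mult.commute)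
  have "(T * sqrt (1 + \<epsilon>^2))^2 = T^2 + (\<epsilon> * T) * (\<epsilon> * T)"
    by (simp add: power_mult_distrib algebra_simps power2_eq_square)
  also have "\<dots> \<le> T^2 + (\<epsilon> * T) * c" using \<epsilon> T by (simp add: mult_left_mono)
  also have "\<dots> < (T + \<epsilon> * c)^2"
    using \<epsilon> T c by (simp add: power2_eq_square algebra_simps add_nonneg_pos)
  finally show ?thesis using \<epsilon> T c
    by (meson add_nonneg_nonneg less_imp_le mult_nonneg_nonneg power_less_imp_less_base)
qed

lemma frob_inner_tilted_certificate:
  fixes U Sig V G N :: "real mat"
  assumes U: "U \<in> carrier_mat n1 q" and Sig: "Sig \<in> carrier_mat q q" and V: "V \<in> carrier_mat n2 q"
    and UU: "transpose_mat U * U = 1\<^sub>m q" and VV: "transpose_mat V * V = 1\<^sub>m q"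
    and G: "G \<in> carrier_mat n1 p" and GG: "transpose_mat G * G = 1\<^sub>m p"
    and GU: "transpose_mat G * U = 0\<^sub>m p q" and N: "N \<in> carrier_mat p n2"
  shows "frob_inner (U * transpose_mat V + a \<cdot>\<^sub>m (G * N)) (U * Sig * transpose_mat V + G * N)
    = (\<Sum>j<q. Sig $$ (j,j)) + a * (frob_norm N)^2"
proof -
  define L where "L = U * Sig * transpose_mat V"
  have L: "L \<in> carrier_mat n1 n2" unfolding L_def using U Sig V by auto
  have UV: "U * transpose_mat V \<in> carrier_mat n1 n2" using U V by auto
  have GN: "G * N \<in> carrier_mat n1 n2" using G N by auto
  have "frob_inner (G * N) L = frob_inner (transpose_mat G * L) N"
    using frob_inner_mult_left[OF L G N] frob_inner_commute[OF GN L] by simp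
  also have "transpose_mat G * L = 0\<^sub>m p n2"
    unfolding L_def using G U Sig V GU
    by (simp add: assoc_mult_mat[of _ p n1 _ q _ n2, symmetric] assoc_mult_mat[of _ p n1 _ q _ q, symmetric])
  finally have "frob_inner (G * N) L = 0" by (simp add: frob_inner_zero_left)
  moreover have "frob_inner (U * transpose_mat V) (G * N) = 0"
    using frob_inner_mult_left[OF UV G N] GU V U G
    by (simp add: assoc_mult_mat[of _ p n1 _ q _ n2, symmetric] frob_inner_zero_left)
  moreover have "frob_inner (G * N) (G * N) = (frob_norm N)^2"
    using frob_inner_mult_left[OF GN G N] G N GG
    by (simp add: assoc_mult_mat[of _ p n1 _ p _ n2, symmetric] frob_norm_square)
  moreover have "frob_inner (U * transpose_mat V) L = (\<Sum>j<q. Sig $$ (j,j))"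
    unfolding L_def by (rule frob_inner_svd[OF U Sig V UU VV])
  ultimately show ?thesis using UV GN L unfolding L_def[symmetric]
    by (simp add: frob_inner_add_left[of _ n1 n2] frob_inner_add_right[of _ n1 n2] frob_inner_smult_left[of _ n1 n2])
qed

text \<open>A nonzero perturbation whose column space is orthogonal to that of \<open>U\<close> strictly increases
  the nuclear norm: tilting the dual certificate \<open>U V\<^sup>T\<close> towards the perturbation gains more than
  the renormalisation costs.\<close>

lemma nuc_norm_add_orthogonal_gt:
  fixes U Sig V G N :: "real mat"
  assumes U: "U \<in> carrier_mat n1 q" and Sig: "Sig \<in> carrier_mat q q" and V: "V \<in> carrier_mat n2 q"
    and UU: "transpose_mat U * U = 1\<^sub>m q" and VV: "transpose_mat V * V = 1\<^sub>m q"
    and Sig_diag: "\<forall>i<q. \<forall>j<q. i \<noteq> j \<longrightarrow> Sig $$ (i,j) = 0" and Sig_nonneg: "\<forall>i<q. Sig $$ (i,i) \<ge> 0"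
    and G: "G \<in> carrier_mat n1 p" and GG: "transpose_mat G * G = 1\<^sub>m p"
    and GU: "transpose_mat G * U = 0\<^sub>m p q"
    and N: "N \<in> carrier_mat p n2" "N \<noteq> 0\<^sub>m p n2"
  shows "(\<Sum>j<q. Sig $$ (j,j)) < nuc_norm (U * Sig * transpose_mat V + G * N)"
proof -
  define T where "T = (\<Sum>j<q. Sig $$ (j,j))"
  define c where "c = frob_norm N"
  define \<epsilon> where "\<epsilon> = c / (T + c)"
  define Z where "Z = (\<epsilon> / c) \<cdot>\<^sub>m (G * N)"
  have T: "T \<ge> 0" unfolding T_def using Sig_nonneg by (intro sum_nonneg) auto
  have c: "c > 0" unfolding c_def using frob_norm_eq_0[OF N(1)] N(2) frob_norm_nonneg[of N] by fastforce
  have \<epsilon>: "\<epsilon> > 0" unfolding \<epsilon>_def using T c by simp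
  have Z: "Z \<in> carrier_mat n1 n2" unfolding Z_def using G N by auto
  have "transpose_mat U * G = transpose_mat (transpose_mat G * U)"
    using G U by (simp add: transpose_mult[of _ p n1 _ q])
  hence UZ: "transpose_mat U * Z = 0\<^sub>m q n2"
    unfolding Z_def using GU G U N
    by (simp add: mult_smult_distrib[of _ q n1 _ n2] assoc_mult_mat[of _ q n1 _ p _ n2, symmetric])
  have Z_le: "vnorm (Z *\<^sub>v v) \<le> \<epsilon> * vnorm v" if v: "v \<in> carrier_vec n2" for v
  proof -
    have "vnorm (Z *\<^sub>v v) = (\<epsilon> / c) * vnorm (G *\<^sub>v (N *\<^sub>v v))"
      unfolding Z_def using G N v \<epsilon> c by (simp add: smult_mat_mult_vec[of _ n1 n2] vnorm_smult[of _ n1]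
          assoc_mult_mat_vec[of _ n1 p _ n2])
    also have "vnorm (G *\<^sub>v (N *\<^sub>v v)) = vnorm (N *\<^sub>v v)"
      using orthonormal_cols_isometry[OF G GG, of "N *\<^sub>v v"] N v by (simp add: vnorm_def)
    also have "(\<epsilon> / c) * vnorm (N *\<^sub>v v) \<le> (\<epsilon> / c) * (c * vnorm v)"
      using vnorm_mult_mat_vec_le[OF N(1) v] \<epsilon> c unfolding c_def by (intro mult_left_mono) auto
    finally show ?thesis using c by simp
  qed
  have "T + \<epsilon> * c = frob_inner (U * transpose_mat V + Z) (U * Sig * transpose_mat V + G * N)"
    using frob_inner_tilted_certificate[OF U Sig V UU VV G GG GU N(1), of "\<epsilon> / c"] c
    unfolding Z_def T_def c_def by (simp add: power2_eq_square)
  also have "\<dots> \<le> sqrt (1 + \<epsilon>^2) * nuc_norm (U * Sig * transpose_mat V + G * N)"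
    using certificate_norm_le[OF U V Z UU VV UZ _ Z_le] \<epsilon> U Sig V G N Z
    by (intro frob_inner_le_mult_nuc_norm[of _ n1 n2]) auto
  finally have "T + \<epsilon> * c \<le> sqrt (1 + \<epsilon>^2) * nuc_norm (U * Sig * transpose_mat V + G * N)" .
  moreover have "T * sqrt (1 + \<epsilon>^2) < T + \<epsilon> * c"
    using sqrt_one_plus_square_gain[OF T c] unfolding \<epsilon>_def .
  ultimately have "sqrt (1 + \<epsilon>^2) * T < sqrt (1 + \<epsilon>^2) * nuc_norm (U * Sig * transpose_mat V + G * N)"
    by (simp add: mult.commute)
  thus ?thesis unfolding T_def by (simp add: add_pos_nonneg)
qed

section \<open>Entrywise operations\<close>

lemma P_Omega_carrier[simp]: "X \<in> carrier_mat n m \<Longrightarrow> P_Omega \<Omega> X \<in> carrier_mat n m"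
  unfolding P_Omega_def by auto

lemma P_Omega_smult: "X \<in> carrier_mat n m \<Longrightarrow> P_Omega \<Omega> (a \<cdot>\<^sub>m X) = a \<cdot>\<^sub>m P_Omega \<Omega> X"
  unfolding P_Omega_def by (intro eq_matI) auto

lemma P_Omega_add: "X \<in> carrier_mat n m \<Longrightarrow> Y \<in> carrier_mat n m \<Longrightarrow>
  P_Omega \<Omega> (X + Y) = P_Omega \<Omega> X + P_Omega \<Omega> Y"
  unfolding P_Omega_def by (intro eq_matI) auto

lemma P_Omega_frob_norm_le: "X \<in> carrier_mat n m \<Longrightarrow> frob_norm (P_Omega \<Omega> X) \<le> frob_norm X"
  unfolding frob_norm_def frob_inner_def P_Omega_def by (auto intro!: sum_mono)

lemma l1_norm_nonneg: "l1_norm X \<ge> 0"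
  unfolding l1_norm_def by (simp add: sum_nonneg)

lemma l1_norm_off_support: "S \<in> carrier_mat n m \<Longrightarrow> H \<in> carrier_mat n m \<Longrightarrow>
  l1_norm (H - P_Omega (supp S) H) = (\<Sum>i<n. \<Sum>j<m. if S $$ (i,j) = 0 then \<bar>H $$ (i,j)\<bar> else 0)"
  unfolding l1_norm_def by (intro sum.cong refl) (auto simp: P_Omega_def supp_def)

text \<open>The subgradient inequality of the \<open>\<ell>\<^sub>1\<close> norm at \<open>S\<close>, sharpened off the support of \<open>S\<close>.\<close>

lemma l1_norm_diff_ge:
  fixes S H :: "real mat"
  assumes S: "S \<in> carrier_mat n m" and H: "H \<in> carrier_mat n m"
  shows "l1_norm S - frob_inner (sgn_mat S) H + l1_norm (H - P_Omega (supp S) H) \<le> l1_norm (S - H)"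
proof -
  have "l1_norm S - frob_inner (sgn_mat S) H + l1_norm (H - P_Omega (supp S) H)
      = (\<Sum>i<n. \<Sum>j<m. \<bar>S $$ (i,j)\<bar> - sgn (S $$ (i,j)) * H $$ (i,j)
           + (if S $$ (i,j) = 0 then \<bar>H $$ (i,j)\<bar> else 0))"
    unfolding l1_norm_off_support[OF S H] unfolding l1_norm_def frob_inner_def sgn_mat_def using S H
    by (simp add: sum.distrib sum_subtractf)
  also have "\<dots> \<le> (\<Sum>i<n. \<Sum>j<m. \<bar>S $$ (i,j) - H $$ (i,j)\<bar>)"
    by (intro sum_mono) (auto simp: sgn_if abs_if)
  also have "\<dots> = l1_norm (S - H)" unfolding l1_norm_def using S H by simp
  finally show ?thesis .
qed

lemma max_norm_ge:
  assumes F: "F \<in> carrier_mat n m" and "i < n" "j < m"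
  shows "\<bar>F $$ (i,j)\<bar> \<le> max_norm F"
proof -
  have "{\<bar>F $$ (i,j)\<bar> | i j. i < dim_row F \<and> j < dim_col F} = (\<lambda>p. \<bar>F $$ p\<bar>) ` ({..<n} \<times> {..<m})"
    using F by auto
  thus ?thesis unfolding max_norm_def by (intro Max_ge) (use assms in auto)
qed

lemma frob_inner_off_support_ge:
  fixes S H F :: "real mat"
  assumes S: "S \<in> carrier_mat n m" and H: "H \<in> carrier_mat n m" and F: "F \<in> carrier_mat n m"
    and F_off: "P_Omega (supp S) F = 0\<^sub>m n m" and F_max: "max_norm F \<le> c"
  shows "- c * l1_norm (H - P_Omega (supp S) H) \<le> frob_inner F H"
proof -
  have F0: "F $$ (i,j) = 0" if "i < n" "j < m" "S $$ (i,j) \<noteq> 0" for i j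
    using arg_cong[OF F_off, of "\<lambda>X. X $$ (i,j)"] that S F by (simp add: P_Omega_def supp_def)
  have "- c * l1_norm (H - P_Omega (supp S) H)
      = (\<Sum>i<n. \<Sum>j<m. - c * (if S $$ (i,j) = 0 then \<bar>H $$ (i,j)\<bar> else 0))"
    unfolding l1_norm_off_support[OF S H] by (simp add: sum_distrib_left)
  also have "\<dots> \<le> (\<Sum>i<n. \<Sum>j<m. F $$ (i,j) * H $$ (i,j))"
  proof (intro sum_mono)
    fix i j assume "i \<in> {..<n}" "j \<in> {..<m}"
    hence ij: "i < n" "j < m" by auto
    have "- (F $$ (i,j) * H $$ (i,j)) \<le> \<bar>F $$ (i,j)\<bar> * \<bar>H $$ (i,j)\<bar>" by (simp add: abs_mult[symmetric])
    also have "\<dots> \<le> c * \<bar>H $$ (i,j)\<bar>"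
      using max_norm_ge[OF F ij] F_max by (intro mult_right_mono) auto
    finally show "- c * (if S $$ (i,j) = 0 then \<bar>H $$ (i,j)\<bar> else 0) \<le> F $$ (i,j) * H $$ (i,j)"
      using F0[OF ij] by auto
  qed
  also have "\<dots> = frob_inner F H" unfolding frob_inner_def using F by simp
  finally show ?thesis .
qed

lemma frob_inner_P_Omega_ge:
  fixes D H :: "real mat"
  assumes D: "D \<in> carrier_mat n m" and H: "H \<in> carrier_mat n m"
  shows "- (frob_norm (P_Omega \<Omega> D) * frob_norm (P_Omega \<Omega> H)) \<le> frob_inner (P_Omega \<Omega> D) H"
proof -
  have "frob_inner (P_Omega \<Omega> D) H = frob_inner (P_Omega \<Omega> D) (P_Omega \<Omega> H)"
    unfolding frob_inner_def using D H by (intro sum.cong refl) (auto simp: P_Omega_def)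
  moreover have "frob_inner (- P_Omega \<Omega> D) (P_Omega \<Omega> H) \<le> frob_norm (- P_Omega \<Omega> D) * frob_norm (P_Omega \<Omega> H)"
    by (rule frob_inner_le_frob_norm[of _ n m]) (use D H in auto)
  ultimately show ?thesis
    using frob_inner_commute[of "P_Omega \<Omega> H" n m] frob_inner_uminus_right[of "P_Omega \<Omega> H" n m] D H
    by (simp add: frob_norm_uminus)
qed

section \<open>The tangent space\<close>

lemma hcat_carrier: "G \<in> carrier_mat n p \<Longrightarrow> U \<in> carrier_mat n q \<Longrightarrow> hcat G U \<in> carrier_mat n (p + q)"
  unfolding hcat_def by auto

lemma col_hcat:
  assumes "G \<in> carrier_mat n p" "U \<in> carrier_mat n q" "k < p + q"
  shows "col (hcat G U) k = (if k < p then col G k else col U (k - p))"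
  using assms unfolding hcat_def by (intro eq_vecI) auto

lemma hcat_orthonormal_cols:
  fixes G U :: "real mat"
  assumes G: "G \<in> carrier_mat n p" and U: "U \<in> carrier_mat n q"
    and GG: "transpose_mat G * G = 1\<^sub>m p" and UU: "transpose_mat U * U = 1\<^sub>m q"
    and GU: "transpose_mat G * U = 0\<^sub>m p q"
  shows "transpose_mat (hcat G U) * hcat G U = 1\<^sub>m (p + q)"
proof (rule eq_matI)
  fix a b assume "a < dim_row (1\<^sub>m (p + q))" "b < dim_col (1\<^sub>m (p + q))"
  hence a: "a < p + q" and b: "b < p + q" by auto
  have GU_entry: "col G i \<bullet> col U j = 0" if "i < p" "j < q" for i j
    using arg_cong[OF GU, of "\<lambda>M. M $$ (i,j)"] G U that by simp
  have UG_entry: "col U j \<bullet> col G i = 0" if "i < p" "j < q" for i j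
    using GU_entry[OF that] comm_scalar_prod[of "col U j" n "col G i"] G U that by simp
  show "(transpose_mat (hcat G U) * hcat G U) $$ (a,b) = 1\<^sub>m (p + q) $$ (a,b)"
    using a b hcat_carrier[OF G U] col_hcat[OF G U a] col_hcat[OF G U b] GU_entry UG_entry
      orthonormal_cols_scalar_prod[OF G GG] orthonormal_cols_scalar_prod[OF U UU] by auto
qed (use hcat_carrier[OF G U] in auto)

lemma hcat_transpose_mult_eq_0:
  fixes G U Z :: "real mat"
  assumes G: "G \<in> carrier_mat n p" and U: "U \<in> carrier_mat n q" and Z: "Z \<in> carrier_mat n m"
    and HZ: "transpose_mat (hcat G U) * Z = 0\<^sub>m (p + q) m"
  shows "transpose_mat G * Z = 0\<^sub>m p m" "transpose_mat U * Z = 0\<^sub>m q m"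
proof -
  have entry: "col (hcat G U) k \<bullet> col Z j = 0" if "k < p + q" "j < m" for k j
    using arg_cong[OF HZ, of "\<lambda>M. M $$ (k,j)"] that hcat_carrier[OF G U] Z by simp
  show "transpose_mat G * Z = 0\<^sub>m p m"
    using G Z entry col_hcat[OF G U] by (intro eq_matI) (auto, metis trans_less_add1)
  show "transpose_mat U * Z = 0\<^sub>m q m"
    using U Z entry[of "p + _"] col_hcat[OF G U, of "p + _"] by (intro eq_matI) auto
qed

definition tangent_space :: "real mat \<Rightarrow> real mat \<Rightarrow> real mat set" where
  "tangent_space H V = {H * transpose_mat Y1 + Y2 * transpose_mat V | Y1 Y2.
     Y1 \<in> carrier_mat (dim_row V) (dim_col H) \<and> Y2 \<in> carrier_mat (dim_row H) (dim_col V)}"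

definition tangent_compl_proj :: "real mat \<Rightarrow> real mat \<Rightarrow> real mat \<Rightarrow> real mat" where
  "tangent_compl_proj H V X =
     (1\<^sub>m (dim_row H) - H * transpose_mat H) * X * (1\<^sub>m (dim_row V) - V * transpose_mat V)"

lemma proj_onto_eqI:
  assumes closed: "\<And>A B. A \<in> P \<Longrightarrow> B \<in> P \<Longrightarrow> A - B \<in> P"
    and carrier: "P \<subseteq> carrier_mat n m" and X: "X \<in> carrier_mat n m"
    and Y: "Y \<in> P" and perp: "\<forall>Z\<in>P. frob_inner (X - Y) Z = 0"
  shows "proj_onto P X = Y"
  unfolding proj_onto_def
proof (rule the_equality)
  fix Y' assume Y': "Y' \<in> P \<and> (\<forall>Z\<in>P. frob_inner (X - Y') Z = 0)"
  have Yc: "Y \<in> carrier_mat n m" "Y' \<in> carrier_mat n m" using Y Y' carrier by auto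
  have D: "Y' - Y \<in> P" "Y' - Y \<in> carrier_mat n m" using closed Y Y' Yc by auto
  have e: "Y' - Y = (X - Y) - (X - Y')" using X Yc by (intro eq_matI) auto
  have "frob_inner (Y' - Y) (Y' - Y) = frob_inner (X - Y) (Y' - Y) - frob_inner (X - Y') (Y' - Y)"
    by (subst (1) e, rule frob_inner_minus_left) (use X Yc in auto)
  hence "frob_inner (Y' - Y) (Y' - Y) = 0" using perp Y' D by simp
  hence D0: "Y' - Y = 0\<^sub>m n m" by (rule frob_inner_self_eq_0[OF D(2)])
  show "Y' = Y"
  proof (rule eq_matI)
    fix i j assume "i < dim_row Y" "j < dim_col Y"
    thus "Y' $$ (i,j) = Y $$ (i,j)" using arg_cong[OF D0, of "\<lambda>M. M $$ (i,j)"] Yc by simp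
  qed (use Yc in auto)
qed (use Y perp in auto)

context
  fixes H V :: "real mat" and n1 n2 p q :: nat
  assumes H: "H \<in> carrier_mat n1 p" and HH: "transpose_mat H * H = 1\<^sub>m p"
    and V: "V \<in> carrier_mat n2 q" and VV: "transpose_mat V * V = 1\<^sub>m q"
begin

lemma tangent_space_carrier: "A \<in> tangent_space H V \<Longrightarrow> A \<in> carrier_mat n1 n2"
  using H V unfolding tangent_space_def by auto

lemma tangent_space_diff: "A \<in> tangent_space H V \<Longrightarrow> B \<in> tangent_space H V \<Longrightarrow> A - B \<in> tangent_space H V"
proof -
  assume "A \<in> tangent_space H V" "B \<in> tangent_space H V"
  then obtain Y1 Y2 Z1 Z2 where
    A: "A = H * transpose_mat Y1 + Y2 * transpose_mat V" "Y1 \<in> carrier_mat n2 p" "Y2 \<in> carrier_mat n1 q" and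
    B: "B = H * transpose_mat Z1 + Z2 * transpose_mat V" "Z1 \<in> carrier_mat n2 p" "Z2 \<in> carrier_mat n1 q"
    using H V unfolding tangent_space_def by auto
  have "A - B = H * transpose_mat (Y1 - Z1) + (Y2 - Z2) * transpose_mat V"
    using A B H V by (simp add: transpose_minus mult_minus_distrib_mat[of _ n1 p] minus_mult_distrib_mat[of _ n1 q])
      (intro eq_matI, auto)
  moreover have "Y1 - Z1 \<in> carrier_mat n2 p" "Y2 - Z2 \<in> carrier_mat n1 q" using A B by auto
  ultimately show ?thesis using H V unfolding tangent_space_def by blast
qed

lemma tangent_compl_proj_carrier: "X \<in> carrier_mat n1 n2 \<Longrightarrow> tangent_compl_proj H V X \<in> carrier_mat n1 n2"
  unfolding tangent_compl_proj_def using H V by auto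

lemma tangent_compl_proj_add:
  assumes "X \<in> carrier_mat n1 n2" "Y \<in> carrier_mat n1 n2"
  shows "tangent_compl_proj H V (X + Y) = tangent_compl_proj H V X + tangent_compl_proj H V Y"
proof -
  define R where "R = 1\<^sub>m n1 - H * transpose_mat H"
  define Q where "Q = 1\<^sub>m n2 - V * transpose_mat V"
  have R: "R \<in> carrier_mat n1 n1" and Q: "Q \<in> carrier_mat n2 n2" unfolding R_def Q_def using H V by auto
  have "R * (X + Y) * Q = R * X * Q + R * Y * Q"
    using R Q assms by (simp add: mult_add_distrib_mat[OF R] add_mult_distrib_mat[of _ n1 n2 _ _ n2])
  thus ?thesis unfolding tangent_compl_proj_def R_def Q_def using H V by simp
qed

lemma tangent_compl_proj_smult:
  "X \<in> carrier_mat n1 n2 \<Longrightarrow> tangent_compl_proj H V (a \<cdot>\<^sub>m X) = a \<cdot>\<^sub>m tangent_compl_proj H V X"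
proof -
  assume X: "X \<in> carrier_mat n1 n2"
  define R where "R = 1\<^sub>m n1 - H * transpose_mat H"
  define Q where "Q = 1\<^sub>m n2 - V * transpose_mat V"
  have R: "R \<in> carrier_mat n1 n1" and Q: "Q \<in> carrier_mat n2 n2" unfolding R_def Q_def using H V by auto
  have "R * (a \<cdot>\<^sub>m X) * Q = a \<cdot>\<^sub>m (R * X * Q)"
    using R Q X by (simp add: mult_smult_distrib[OF R X] mult_smult_assoc_mat[of _ n1 n2 Q n2])
  thus ?thesis unfolding tangent_compl_proj_def R_def Q_def using H V by simp
qed

lemma tangent_compl_proj_annihilates:
  assumes X: "X \<in> carrier_mat n1 n2"
  shows "transpose_mat H * tangent_compl_proj H V X = 0\<^sub>m p n2"
    "tangent_compl_proj H V X * V = 0\<^sub>m n1 q"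
proof -
  define R where "R = 1\<^sub>m n1 - H * transpose_mat H"
  define Q where "Q = 1\<^sub>m n2 - V * transpose_mat V"
  have R: "R \<in> carrier_mat n1 n1" and Q: "Q \<in> carrier_mat n2 n2" unfolding R_def Q_def using H V by auto
  have P: "tangent_compl_proj H V X = R * X * Q" unfolding tangent_compl_proj_def R_def Q_def using H V by simp
  have "transpose_mat H * (R * X * Q) = (transpose_mat H * R) * X * Q"
    using H R X Q by (simp add: assoc_mult_mat[of _ p n1 _ n1 _ n2] assoc_mult_mat[of _ p n1 _ n2 _ n2])
  thus "transpose_mat H * tangent_compl_proj H V X = 0\<^sub>m p n2"
    unfolding P R_def using orthonormal_cols_compl_proj(1)[OF H HH] X Q by simp
  have "(R * X * Q) * V = (R * X) * (Q * V)" by (rule assoc_mult_mat) (use R X Q V in auto)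
  thus "tangent_compl_proj H V X * V = 0\<^sub>m n1 q"
    unfolding P Q_def using orthonormal_cols_compl_proj(2)[OF V VV] R X by simp
qed

lemma frob_inner_tangent_space_eq_0:
  assumes Z: "Z \<in> carrier_mat n1 n2" and HZ: "transpose_mat H * Z = 0\<^sub>m p n2" and ZV: "Z * V = 0\<^sub>m n1 q"
    and Y: "Y \<in> tangent_space H V"
  shows "frob_inner Z Y = 0"
proof -
  obtain Y1 Y2 where Y: "Y = H * transpose_mat Y1 + Y2 * transpose_mat V"
    and Y1: "Y1 \<in> carrier_mat n2 p" and Y2: "Y2 \<in> carrier_mat n1 q"
    using Y H V unfolding tangent_space_def by auto
  have "frob_inner Z (H * transpose_mat Y1) = 0"
    using frob_inner_mult_left[of Z n1 n2 H p "transpose_mat Y1"] HZ Z H Y1 frob_inner_zero_left by simp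
  moreover have "frob_inner Z (Y2 * transpose_mat V) = 0"
    using frob_inner_mult_right[of Z n1 n2 Y2 q "transpose_mat V"] ZV Z Y2 V frob_inner_zero_left by simp
  ultimately show ?thesis unfolding Y using Z H V Y1 Y2 by (subst frob_inner_add_right[of _ n1 n2]) auto
qed

lemma diff_tangent_compl_proj_mem:
  assumes X: "X \<in> carrier_mat n1 n2"
  shows "X - tangent_compl_proj H V X \<in> tangent_space H V"
proof -
  define R where "R = 1\<^sub>m n1 - H * transpose_mat H"
  have R: "R \<in> carrier_mat n1 n1" unfolding R_def using H by auto
  have RX: "R * X = X - H * (transpose_mat H * X)"
    unfolding R_def using H X
    by (simp add: minus_mult_distrib_mat[of _ n1 n1] assoc_mult_mat[of H n1 p _ n1 _ n2])
  have "tangent_compl_proj H V X = (R * X) * (1\<^sub>m n2 - V * transpose_mat V)"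
    unfolding tangent_compl_proj_def R_def using H V by simp
  also have "\<dots> = R * X - (R * X) * (V * transpose_mat V)"
    by (subst mult_minus_distrib_mat[of _ n1 n2]) (use R X V in auto)
  also have "(R * X) * (V * transpose_mat V) = (R * X * V) * transpose_mat V"
    by (rule assoc_mult_mat[symmetric]) (use R X V in auto)
  finally have "tangent_compl_proj H V X = R * X - (R * X * V) * transpose_mat V" .
  hence "X - tangent_compl_proj H V X = H * transpose_mat (transpose_mat X * H) + (R * X * V) * transpose_mat V"
    unfolding RX using H X V R by (simp add: transpose_mult[of _ n2 n1 _ p]) (intro eq_matI, auto)
  moreover have "transpose_mat X * H \<in> carrier_mat n2 p" "R * X * V \<in> carrier_mat n1 q" using X H R V by auto
  ultimately show ?thesis unfolding tangent_space_def using H V by blast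
qed

lemma proj_onto_tangent_space:
  assumes X: "X \<in> carrier_mat n1 n2"
  shows "proj_onto (tangent_space H V) X = X - tangent_compl_proj H V X"
proof (rule proj_onto_eqI[OF tangent_space_diff _ X diff_tangent_compl_proj_mem[OF X]])
  show "tangent_space H V \<subseteq> carrier_mat n1 n2" using tangent_space_carrier by auto
  have "X - (X - tangent_compl_proj H V X) = tangent_compl_proj H V X"
    using X tangent_compl_proj_carrier[OF X] by (intro eq_matI) auto
  thus "\<forall>Z\<in>tangent_space H V. frob_inner (X - (X - tangent_compl_proj H V X)) Z = 0"
    using frob_inner_tangent_space_eq_0[OF tangent_compl_proj_carrier[OF X] tangent_compl_proj_annihilates[OF X]]
    by simp
qed

lemma frob_norm_diff_tangent_compl_proj_le:
  assumes X: "X \<in> carrier_mat n1 n2"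
  shows "frob_norm (X - tangent_compl_proj H V X) \<le> frob_norm X"
proof -
  let ?K = "tangent_compl_proj H V X"
  have K: "?K \<in> carrier_mat n1 n2" by (rule tangent_compl_proj_carrier[OF X])
  have "frob_inner ?K (X - ?K) = 0"
    by (rule frob_inner_tangent_space_eq_0[OF K tangent_compl_proj_annihilates[OF X]
          diff_tangent_compl_proj_mem[OF X]])
  hence "frob_norm (X - ?K) \<le> frob_norm ((X - ?K) + ?K)"
    using X K by (intro frob_norm_le_add_orthogonal[of _ n1 n2]) auto
  also have "(X - ?K) + ?K = X" using X K by (intro eq_matI) auto
  finally show ?thesis .
qed

lemma P_Omega_tangent_proj_le:
  assumes "op_norm n1 n2 (\<lambda>X. P_Omega \<Omega> (proj_onto (tangent_space H V) X)) \<le> c"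
    and X: "X \<in> carrier_mat n1 n2"
  shows "frob_norm (P_Omega \<Omega> (X - tangent_compl_proj H V X)) \<le> c * frob_norm X"
proof -
  have proj: "proj_onto (tangent_space H V) Y = Y - tangent_compl_proj H V Y" if "Y \<in> carrier_mat n1 n2" for Y
    by (rule proj_onto_tangent_space[OF that])
  have "frob_norm (P_Omega \<Omega> (proj_onto (tangent_space H V) X)) \<le> c * frob_norm X"
  proof (rule op_norm_bound[OF assms(1) _ _ _ X, of 1])
    fix Y :: "real mat" and a :: real assume Y: "Y \<in> carrier_mat n1 n2"
    have KY: "tangent_compl_proj H V Y \<in> carrier_mat n1 n2" by (rule tangent_compl_proj_carrier[OF Y])
    show "P_Omega \<Omega> (proj_onto (tangent_space H V) Y) \<in> carrier_mat n1 n2"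
      using proj[OF Y] P_Omega_carrier[OF minus_carrier_mat[OF KY]] by simp
    show "frob_norm (P_Omega \<Omega> (proj_onto (tangent_space H V) Y)) \<le> 1 * frob_norm Y"
      using proj[OF Y] P_Omega_frob_norm_le[OF minus_carrier_mat[OF KY], of \<Omega> Y]
        frob_norm_diff_tangent_compl_proj_le[OF Y] by simp
    have "a \<cdot>\<^sub>m Y - tangent_compl_proj H V (a \<cdot>\<^sub>m Y) = a \<cdot>\<^sub>m (Y - tangent_compl_proj H V Y)"
      using Y KY tangent_compl_proj_smult[OF Y] by (intro eq_matI) (auto simp: algebra_simps)
    thus "P_Omega \<Omega> (proj_onto (tangent_space H V) (a \<cdot>\<^sub>m Y)) = a \<cdot>\<^sub>m P_Omega \<Omega> (proj_onto (tangent_space H V) Y)"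
      using proj[OF Y] proj[of "a \<cdot>\<^sub>m Y"] Y P_Omega_smult[OF minus_carrier_mat[OF KY], of \<Omega> a Y] by simp
  qed
  thus ?thesis using proj[OF X] by simp
qed

lemma proj_onto_tangent_space_eq_0:
  assumes X: "X \<in> carrier_mat n1 n2" and "proj_onto (tangent_space H V) X = 0\<^sub>m n1 n2"
  shows "transpose_mat H * X = 0\<^sub>m p n2" "X * V = 0\<^sub>m n1 q"
proof -
  have KX: "tangent_compl_proj H V X \<in> carrier_mat n1 n2" by (rule tangent_compl_proj_carrier[OF X])
  have "X = tangent_compl_proj H V X"
  proof (rule eq_matI)
    fix i j assume "i < dim_row (tangent_compl_proj H V X)" "j < dim_col (tangent_compl_proj H V X)"
    thus "X $$ (i,j) = tangent_compl_proj H V X $$ (i,j)"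
      using arg_cong[OF assms(2), of "\<lambda>A. A $$ (i,j)"] proj_onto_tangent_space[OF X] X KX by simp
  qed (use X KX in auto)
  thus "transpose_mat H * X = 0\<^sub>m p n2" "X * V = 0\<^sub>m n1 q"
    using tangent_compl_proj_annihilates[OF X] by auto
qed

end

section \<open>The dual certificate\<close>

text \<open>The hypotheses of the theorem in normalised form: \<open>U Sig V\<^sup>T\<close> is the reduced SVD of
  \<open>L\<^sub>n\<^sub>e\<^sub>w\<close>, the tangent space \<open>\<Pi>\<close> is \<open>tangent_space (hcat G U) V\<close>, \<open>P\<^sub>\<Pi> W = 0\<close> is expressed by
  \<open>W_perp\<close>, and the operator-norm bounds on \<open>P\<^sub>\<Omega> P\<^sub>\<Pi>\<close> and \<open>W\<close> are stated pointwise.\<close>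

locale rpca_dual_certificate =
  fixes n1 n2 rG q :: nat and lam :: real and G U Sig V S W F D :: "real mat"
  assumes G: "G \<in> carrier_mat n1 rG" and GG: "transpose_mat G * G = 1\<^sub>m rG"
    and U: "U \<in> carrier_mat n1 q" and UU: "transpose_mat U * U = 1\<^sub>m q"
    and V: "V \<in> carrier_mat n2 q" and VV: "transpose_mat V * V = 1\<^sub>m q"
    and Sig: "Sig \<in> carrier_mat q q" and Sig_diag: "\<forall>i<q. \<forall>j<q. i \<noteq> j \<longrightarrow> Sig $$ (i,j) = 0"
    and Sig_nonneg: "\<forall>i<q. Sig $$ (i,i) \<ge> 0"
    and GU: "transpose_mat G * U = 0\<^sub>m rG q"
    and S: "S \<in> carrier_mat n1 n2" and W: "W \<in> carrier_mat n1 n2"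
    and F: "F \<in> carrier_mat n1 n2" and D: "D \<in> carrier_mat n1 n2"
    and incoherence: "\<And>X. X \<in> carrier_mat n1 n2 \<Longrightarrow>
       frob_norm (P_Omega (supp S) (X - tangent_compl_proj (hcat G U) V X)) \<le> 1/4 * frob_norm X"
    and lam: "0 < lam" "lam < 3/10"
    and cert: "U * transpose_mat V + W = lam \<cdot>\<^sub>m (sgn_mat S + F + P_Omega (supp S) D)"
    and W_perp: "transpose_mat (hcat G U) * W = 0\<^sub>m (rG + q) n2" "W * V = 0\<^sub>m n1 q"
    and W_le: "\<And>v. v \<in> carrier_vec n2 \<Longrightarrow> vnorm (W *\<^sub>v v) \<le> 9/10 * vnorm v"
    and F_off: "P_Omega (supp S) F = 0\<^sub>m n1 n2" and F_max: "max_norm F \<le> 9/10"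
    and D_le: "frob_norm (P_Omega (supp S) D) \<le> 1/4"
begin

abbreviation "H \<equiv> hcat G U"
abbreviation "L0 \<equiv> U * Sig * transpose_mat V"
abbreviation "P_perp \<equiv> tangent_compl_proj H V"
abbreviation "obj L' S' \<equiv> nuc_norm L' + lam * l1_norm S'"

lemma H_orthonormal: "H \<in> carrier_mat n1 (rG + q)" "transpose_mat H * H = 1\<^sub>m (rG + q)"
  using hcat_carrier[OF G U] hcat_orthonormal_cols[OF G U GG UU GU] by auto

lemma L0_carrier: "L0 \<in> carrier_mat n1 n2"
  using U Sig V by auto

lemma U_perp_W: "transpose_mat U * W = 0\<^sub>m q n2" and G_perp_W: "transpose_mat G * W = 0\<^sub>m rG n2"
  using hcat_transpose_mult_eq_0[OF G U W W_perp(1)] by auto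

lemma L0_tangent: "L0 \<in> tangent_space H V"
  unfolding tangent_space_def using H_orthonormal U Sig V
  by (intro CollectI exI[of _ "0\<^sub>m n2 (rG + q)"] exI[of _ "U * Sig"]) auto

lemma nuc_norm_L0: "nuc_norm L0 = (\<Sum>j<q. Sig $$ (j,j))"
  by (rule nuc_norm_svd[OF U Sig V UU VV Sig_diag Sig_nonneg])

lemma P_perp_G_mult: "N \<in> carrier_mat rG n2 \<Longrightarrow> P_perp (G * N) = 0\<^sub>m n1 n2"
proof -
  assume N: "N \<in> carrier_mat rG n2"
  define R where "R = 1\<^sub>m n1 - H * transpose_mat H"
  have R: "R \<in> carrier_mat n1 n1" "transpose_mat R = R"
    unfolding R_def using H_orthonormal
    by (auto simp: transpose_minus[of _ n1 n1] transpose_mult[of _ n1 "rG + q" _ n1])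
  have "transpose_mat G * R = 0\<^sub>m rG n1"
    using hcat_transpose_mult_eq_0[OF G U R(1)] orthonormal_cols_compl_proj(1)[OF H_orthonormal]
    unfolding R_def by auto
  hence "transpose_mat (transpose_mat G * R) = 0\<^sub>m n1 rG" by auto
  hence "R * G = 0\<^sub>m n1 rG" using R G by (simp add: transpose_mult[of _ rG n1 _ n1])
  hence "R * (G * N) = 0\<^sub>m n1 n2" using R G N by (simp add: assoc_mult_mat[of _ n1 n1 _ rG _ n2, symmetric])
  moreover have "P_perp (G * N) = R * (G * N) * (1\<^sub>m n2 - V * transpose_mat V)"
    unfolding tangent_compl_proj_def R_def using H_orthonormal V by simp
  ultimately show ?thesis using V by simp
qed

text \<open>The certificate \<open>U V\<^sup>T + W + Y / (10 \<parallel>Y\<parallel>\<^sub>F)\<close> still has spectral norm at most one because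
  \<open>\<parallel>W\<parallel> \<le> 9/10\<close>; for \<open>Y = 0\<close> the quotient vanishes since \<open>x / 0 = 0\<close>.\<close>

lemma nuc_norm_ge_certificate:
  assumes L': "L' \<in> carrier_mat n1 n2" and Y: "Y \<in> carrier_mat n1 n2"
    and UY: "transpose_mat U * Y = 0\<^sub>m q n2" and YV: "Y * V = 0\<^sub>m n1 q"
  shows "frob_inner (U * transpose_mat V + W) L' + frob_inner Y L' / (10 * frob_norm Y) \<le> nuc_norm L'"
proof -
  define \<kappa> where "\<kappa> = 1 / (10 * frob_norm Y)"
  define Z where "Z = W + \<kappa> \<cdot>\<^sub>m Y"
  have \<kappa>: "\<kappa> \<ge> 0" "\<kappa> * frob_norm Y \<le> 1/10"
    unfolding \<kappa>_def using frob_norm_nonneg[of Y] by (cases "frob_norm Y = 0") auto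
  have Z: "Z \<in> carrier_mat n1 n2" unfolding Z_def using W Y by auto
  have UZ: "transpose_mat U * Z = 0\<^sub>m q n2"
    unfolding Z_def using U W Y U_perp_W UY
    by (simp add: mult_add_distrib_mat[of _ q n1] mult_smult_distrib[of _ q n1])
  have ZV: "Z * V = 0\<^sub>m n1 q"
    unfolding Z_def using V W Y W_perp(2) YV
    by (simp add: add_mult_distrib_mat[of _ n1 n2] mult_smult_assoc_mat[of _ n1 n2])
  have Z_le: "vnorm (Z *\<^sub>v v) \<le> vnorm v" if v: "v \<in> carrier_vec n2" for v
  proof -
    have "vnorm (Z *\<^sub>v v) \<le> vnorm (W *\<^sub>v v) + \<kappa> * vnorm (Y *\<^sub>v v)"
      unfolding Z_def using W Y v vnorm_add_le[of "W *\<^sub>v v" n1 "\<kappa> \<cdot>\<^sub>v (Y *\<^sub>v v)"] \<kappa>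
      by (simp add: add_mult_distrib_mat_vec[of _ n1 n2] smult_mat_mult_vec[of _ n1 n2] vnorm_smult[of _ n1])
    also have "\<dots> \<le> 9/10 * vnorm v + \<kappa> * (frob_norm Y * vnorm v)"
      using W_le[OF v] vnorm_mult_mat_vec_le[OF Y v] \<kappa>(1) by (simp add: add_mono mult_left_mono)
    also have "\<dots> \<le> vnorm v"
      using mult_right_mono[OF \<kappa>(2) vnorm_nonneg[of v]] by (simp add: mult.assoc)
    finally show ?thesis .
  qed
  have "frob_inner (U * transpose_mat V + Z) L' \<le> nuc_norm L'"
    using frob_inner_le_nuc_norm[OF L' _ certificate_contraction[OF U V Z UU VV UZ ZV Z_le]] U V Z by simp
  moreover have "frob_inner (U * transpose_mat V + Z) L'
      = frob_inner (U * transpose_mat V + W) L' + \<kappa> * frob_inner Y L'"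
    unfolding Z_def using U V W Y L'
    by (simp add: assoc_add_mat[of _ n1 n2, symmetric] frob_inner_add_left[of _ n1 n2]
        frob_inner_smult_left[of _ n1 n2])
  ultimately show ?thesis unfolding \<kappa>_def by simp
qed

lemma W_perp_tangent: "Y \<in> tangent_space H V \<Longrightarrow> frob_inner W Y = 0"
  using frob_inner_tangent_space_eq_0[OF H_orthonormal V VV W W_perp] by simp

lemma G_perp_cert: "transpose_mat G * (U * transpose_mat V + W) = 0\<^sub>m rG n2"
proof -
  have "transpose_mat G * (U * transpose_mat V + W) = (transpose_mat G * U) * transpose_mat V + transpose_mat G * W"
    using G U V W by (simp add: mult_add_distrib_mat[of _ rG n1 _ n2] assoc_mult_mat[of _ rG n1 _ q _ n2])
  thus ?thesis using GU G_perp_W V by simp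
qed

context
  fixes L' S' X' X0 :: "real mat"
  assumes L': "L' \<in> carrier_mat n1 n2" and S': "S' \<in> carrier_mat n1 n2"
    and X': "X' \<in> carrier_mat n2 rG" and X0: "X0 \<in> carrier_mat n2 rG"
    and feasible: "L' + G * transpose_mat X' + S' = L0 + G * transpose_mat X0 + S"
begin

abbreviation "E \<equiv> S - S'"
abbreviation "N \<equiv> transpose_mat (X' - X0)"
abbreviation "Delta_perp \<equiv> P_perp (L' - L0)"

lemma E_carrier: "E \<in> carrier_mat n1 n2" and N_carrier: "N \<in> carrier_mat rG n2"
  and diff_carrier: "L' - L0 \<in> carrier_mat n1 n2"
  using S S' X' X0 minus_carrier_mat[OF L0_carrier] by auto

lemma Delta_perp_carrier: "Delta_perp \<in> carrier_mat n1 n2"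
  using tangent_compl_proj_carrier[OF H_orthonormal V VV diff_carrier] .

lemma E_eq: "E = (L' - L0) + G * N"
proof (rule eq_matI)
  fix i j assume "i < dim_row ((L' - L0) + G * N)" "j < dim_col ((L' - L0) + G * N)"
  hence ij: "i < n1" "j < n2" using L' G X' X0 by auto
  have "(G * N) $$ (i,j) = (G * transpose_mat X') $$ (i,j) - (G * transpose_mat X0) $$ (i,j)"
    using G X' X0 ij by (simp add: transpose_minus mult_minus_distrib_mat[of _ n1 rG])
  thus "E $$ (i,j) = ((L' - L0) + G * N) $$ (i,j)"
    using arg_cong[OF feasible, of "\<lambda>A. A $$ (i,j)"] ij L' S' S G X' X0 U V by simp
qed (use S S' L' G X' X0 in auto)

lemma P_perp_E: "P_perp E = Delta_perp"
  using E_eq tangent_compl_proj_add[OF H_orthonormal V VV diff_carrier, of "G * N"] P_perp_G_mult[OF N_carrier]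
    G N_carrier Delta_perp_carrier by simp

lemma Delta_perp_orthogonal: "transpose_mat H * Delta_perp = 0\<^sub>m (rG + q) n2" "Delta_perp * V = 0\<^sub>m n1 q"
  using tangent_compl_proj_annihilates[OF H_orthonormal V VV diff_carrier] by auto

lemma frob_inner_Delta_perp: "frob_inner Delta_perp L' = (frob_norm Delta_perp)^2"
proof -
  let ?R = "(L' - L0) - Delta_perp"
  have perp: "frob_inner Delta_perp Y = 0" if "Y \<in> tangent_space H V" for Y
    using frob_inner_tangent_space_eq_0[OF H_orthonormal V VV Delta_perp_carrier Delta_perp_orthogonal that] .
  have R: "?R \<in> carrier_mat n1 n2" using minus_carrier_mat[OF Delta_perp_carrier] .
  have "L' = L0 + ?R + Delta_perp" using L' U Sig V Delta_perp_carrier by (intro eq_matI) auto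
  hence "frob_inner Delta_perp L' = frob_inner Delta_perp (L0 + ?R) + frob_inner Delta_perp Delta_perp"
    using frob_inner_add_right[OF Delta_perp_carrier add_carrier_mat[OF R] Delta_perp_carrier] by metis
  also have "\<dots> = frob_inner Delta_perp L0 + frob_inner Delta_perp ?R + frob_inner Delta_perp Delta_perp"
    using frob_inner_add_right[OF Delta_perp_carrier L0_carrier R] by simp
  also have "\<dots> = (frob_norm Delta_perp)^2"
    using perp[OF L0_tangent] perp[OF diff_tangent_compl_proj_mem[OF H_orthonormal V VV diff_carrier]]
    by (simp add: frob_norm_square)
  finally show ?thesis .
qed

lemma P_Omega_E_le:
  "frob_norm (P_Omega (supp S) E) \<le> l1_norm (E - P_Omega (supp S) E) / 3 + 4/3 * frob_norm Delta_perp"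
proof -
  let ?P = "P_Omega (supp S)"
  have EK: "E - Delta_perp \<in> carrier_mat n1 n2" and PE: "?P E \<in> carrier_mat n1 n2"
    and EP: "E - ?P E \<in> carrier_mat n1 n2"
    using minus_carrier_mat[OF Delta_perp_carrier] P_Omega_carrier[OF E_carrier]
      minus_carrier_mat[OF P_Omega_carrier[OF E_carrier]] by auto
  have "E = (E - Delta_perp) + Delta_perp" using S S' Delta_perp_carrier by (intro eq_matI) auto
  hence "frob_norm (?P E) \<le> frob_norm (?P (E - Delta_perp)) + frob_norm (?P Delta_perp)"
    using frob_norm_add_le[OF P_Omega_carrier[OF EK] P_Omega_carrier[OF Delta_perp_carrier]]
      P_Omega_add[OF EK Delta_perp_carrier] by metis
  also have "\<dots> \<le> 1/4 * frob_norm E + frob_norm Delta_perp"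
    using incoherence[OF E_carrier] P_Omega_frob_norm_le[OF Delta_perp_carrier, of "supp S"]
    unfolding P_perp_E by linarith
  also have "frob_norm E \<le> frob_norm (?P E) + frob_norm (E - ?P E)"
  proof -
    have "E = ?P E + (E - ?P E)" using S S' by (intro eq_matI) (auto simp: P_Omega_def)
    thus ?thesis using frob_norm_add_le[OF PE EP] by metis
  qed
  finally have "frob_norm (?P E) \<le> 1/4 * (frob_norm (?P E) + frob_norm (E - ?P E)) + frob_norm Delta_perp"
    by simp
  moreover have "frob_norm (E - ?P E) \<le> l1_norm (E - ?P E)" by (rule frob_norm_le_l1_norm[OF EP])
  ultimately show ?thesis by (simp add: field_simps)
qed

lemma frob_inner_cert_L':
  "frob_inner (U * transpose_mat V + W) L' = (\<Sum>j<q. Sig $$ (j,j)) + frob_inner (U * transpose_mat V + W) E"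
proof -
  let ?C = "U * transpose_mat V + W"
  have C: "?C \<in> carrier_mat n1 n2" using U V W by auto
  have GN: "G * N \<in> carrier_mat n1 n2" using G N_carrier by auto
  have "L' = L0 + E - G * N" using E_eq L' U Sig V G X' X0 by (intro eq_matI) auto
  hence "frob_inner ?C L' = frob_inner ?C L0 + frob_inner ?C E - frob_inner ?C (G * N)"
    using C L0_carrier E_carrier GN by (simp add: frob_inner_minus_right[of _ n1 n2] frob_inner_add_right[of _ n1 n2])
  moreover have "frob_inner ?C L0 = (\<Sum>j<q. Sig $$ (j,j))"
    using frob_inner_svd[OF U Sig V UU VV] W_perp_tangent[OF L0_tangent] U V W L0_carrier
    by (simp add: frob_inner_add_left[of _ n1 n2])
  moreover have "frob_inner ?C (G * N) = 0"
    using frob_inner_mult_left[OF C G N_carrier] G_perp_cert by (simp add: frob_inner_zero_left)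
  ultimately show ?thesis by simp
qed

lemma frob_inner_cert_E_ge:
  "lam * l1_norm S + lam * (l1_norm (E - P_Omega (supp S) E) / 60 - frob_norm Delta_perp / 3)
     \<le> frob_inner (U * transpose_mat V + W) E + lam * l1_norm S'"
proof -
  let ?P = "P_Omega (supp S)"
  define l1c where "l1c = l1_norm (E - ?P E)"
  have sgnS: "sgn_mat S \<in> carrier_mat n1 n2" unfolding sgn_mat_def using S by auto
  have "frob_inner (U * transpose_mat V + W) E
      = lam * (frob_inner (sgn_mat S) E + frob_inner F E + frob_inner (?P D) E)"
    unfolding cert using sgnS F D E_carrier
    by (simp add: frob_inner_smult_left[of _ n1 n2] frob_inner_add_left[of _ n1 n2])
  moreover have "l1_norm S - frob_inner (sgn_mat S) E + l1c \<le> l1_norm S'"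
  proof -
    have "S - E = S'" using S S' by (intro eq_matI) auto
    thus ?thesis using l1_norm_diff_ge[OF S E_carrier] unfolding l1c_def by simp
  qed
  moreover have "- 9/10 * l1c \<le> frob_inner F E"
    using frob_inner_off_support_ge[OF S E_carrier F F_off F_max] unfolding l1c_def by simp
  moreover have "- (l1c / 12 + frob_norm Delta_perp / 3) \<le> frob_inner (?P D) E"
  proof -
    have "frob_norm (?P D) * frob_norm (?P E) \<le> 1/4 * (l1c / 3 + 4/3 * frob_norm Delta_perp)"
      using mult_mono[OF D_le P_Omega_E_le] frob_norm_nonneg unfolding l1c_def by simp
    thus ?thesis using frob_inner_P_Omega_ge[OF D E_carrier, of "supp S"] by simp
  qed
  ultimately have "l1_norm S + (l1c / 60 - frob_norm Delta_perp / 3)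
      \<le> (frob_inner (sgn_mat S) E + frob_inner F E + frob_inner (?P D) E) + l1_norm S'"
    and cert_E: "frob_inner (U * transpose_mat V + W) E
      = lam * (frob_inner (sgn_mat S) E + frob_inner F E + frob_inner (?P D) E)"
    by linarith+
  from mult_left_mono[OF this(1), of lam] lam(1) show ?thesis
    unfolding cert_E l1c_def by (simp add: distrib_left)
qed

lemma objective_gap:
  "obj L0 S + (1/10 - lam/3) * frob_norm Delta_perp + lam/60 * l1_norm (E - P_Omega (supp S) E) \<le> obj L' S'"
proof -
  have "frob_inner (U * transpose_mat V + W) L' + frob_norm Delta_perp / 10 \<le> nuc_norm L'"
    using nuc_norm_ge_certificate[OF L' Delta_perp_carrier _ Delta_perp_orthogonal(2)] frob_inner_Delta_perp
      hcat_transpose_mult_eq_0(2)[OF G U Delta_perp_carrier Delta_perp_orthogonal(1)]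
    by (cases "frob_norm Delta_perp = 0") (auto simp: power2_eq_square)
  thus ?thesis
    using frob_inner_cert_L' frob_inner_cert_E_ge nuc_norm_L0 by (simp add: algebra_simps)
qed

lemma objective_minimal: "obj L0 S \<le> obj L' S'"
proof -
  have "0 \<le> (1/10 - lam/3) * frob_norm Delta_perp" "0 \<le> lam/60 * l1_norm (E - P_Omega (supp S) E)"
    using lam frob_norm_nonneg l1_norm_nonneg by auto
  thus ?thesis using objective_gap by linarith
qed

lemma sparse_part_unique:
  assumes le: "obj L' S' \<le> obj L0 S"
  shows "S' = S"
proof -
  let ?P = "P_Omega (supp S)"
  have "(1/10 - lam/3) * frob_norm Delta_perp + lam/60 * l1_norm (E - ?P E) \<le> 0"
    using objective_gap le by simp
  moreover have "(1/10 - lam/3) * frob_norm Delta_perp \<ge> 0" "lam/60 * l1_norm (E - ?P E) \<ge> 0"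
    using lam frob_norm_nonneg l1_norm_nonneg by auto
  ultimately have "(1/10 - lam/3) * frob_norm Delta_perp = 0" "lam/60 * l1_norm (E - ?P E) = 0" by linarith+
  hence "frob_norm Delta_perp = 0" "l1_norm (E - ?P E) = 0" using lam by auto
  hence "frob_norm (?P E) = 0" "frob_norm (E - ?P E) = 0"
    using P_Omega_E_le frob_norm_le_l1_norm[of "E - ?P E" n1 n2]
      minus_carrier_mat[OF P_Omega_carrier[OF E_carrier], of E] frob_norm_nonneg by (auto intro: antisym)
  hence PE0: "?P E = 0\<^sub>m n1 n2" and PE1: "E - ?P E = 0\<^sub>m n1 n2"
    using frob_norm_eq_0 P_Omega_carrier[OF E_carrier] minus_carrier_mat[OF P_Omega_carrier[OF E_carrier]]
    by auto
  show "S' = S"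
  proof (rule eq_matI)
    fix i j assume "i < dim_row S" "j < dim_col S"
    thus "S' $$ (i,j) = S $$ (i,j)"
      using arg_cong[OF PE0, of "\<lambda>A. A $$ (i,j)"] arg_cong[OF PE1, of "\<lambda>A. A $$ (i,j)"] S S'
      by (auto simp: P_Omega_def)
  qed (use S S' in auto)
qed

lemma low_rank_part_eq: "S' = S \<Longrightarrow> L' = L0 + G * (- N)"
proof (rule eq_matI)
  fix i j assume "S' = S" "i < dim_row (L0 + G * (- N))" "j < dim_col (L0 + G * (- N))"
  thus "L' $$ (i,j) = (L0 + G * (- N)) $$ (i,j)"
    using arg_cong[OF E_eq, of "\<lambda>A. A $$ (i,j)"] L' U Sig V G X' X0 S by simp
qed (use L' U Sig V G X' X0 in auto)

lemma minimizer_unique: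
  assumes le: "obj L' S' \<le> obj L0 S"
  shows "L' = L0 \<and> S' = S \<and> X' = X0"
proof -
  have S'_eq: "S' = S" by (rule sparse_part_unique[OF le])
  have N0: "- N = 0\<^sub>m rG n2"
  proof (rule ccontr)
    assume "- N \<noteq> 0\<^sub>m rG n2"
    hence "nuc_norm L0 < nuc_norm L'"
      using nuc_norm_add_orthogonal_gt[OF U Sig V UU VV Sig_diag Sig_nonneg G GG GU, of "- N"] N_carrier
      unfolding nuc_norm_L0 low_rank_part_eq[OF S'_eq] by auto
    thus False using le S'_eq by simp
  qed
  have "X' = X0"
  proof (rule eq_matI)
    fix i j assume "i < dim_row X0" "j < dim_col X0"
    thus "X' $$ (i,j) = X0 $$ (i,j)" using arg_cong[OF N0, of "\<lambda>A. A $$ (j,i)"] X' X0 by auto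
  qed (use X' X0 in auto)
  moreover have "L' = L0" using low_rank_part_eq[OF S'_eq] N0 G U Sig V by simp
  ultimately show ?thesis using S'_eq by simp
qed

end

lemma unique_minimizer:
  assumes X0: "X0 \<in> carrier_mat n2 rG"
  shows "\<forall>L' S' X'. L' \<in> carrier_mat n1 n2 \<and> S' \<in> carrier_mat n1 n2 \<and> X' \<in> carrier_mat n2 rG \<and>
      L' + G * transpose_mat X' + S' = L0 + G * transpose_mat X0 + S \<longrightarrow>
    obj L0 S \<le> obj L' S' \<and> (obj L' S' \<le> obj L0 S \<longrightarrow> (L', S', X') = (L0, S, X0))"
  using objective_minimal[OF _ _ _ X0] minimizer_unique[OF _ _ _ X0] by blast

end

theorem lemma3:
  fixes n1 n2 r rG rnew :: nat and lam :: real
    and M L S G Unew Snew Vnew W F D :: "real mat"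
  assumes M: "M = L + S"
    and dims: "L \<in> carrier_mat n1 n2" "S \<in> carrier_mat n1 n2"
    and "mrank L = r"
    and G: "G \<in> carrier_mat n1 rG" "basis_mat G"
    and "mrank ((1\<^sub>m n1 - G * transpose_mat G) * L) = rnew" "rnew < r"
    and svd: "Unew \<in> carrier_mat n1 rnew" "Snew \<in> carrier_mat rnew rnew" "Vnew \<in> carrier_mat n2 rnew"
       "basis_mat Unew" "basis_mat Vnew"
       "\<forall>i<rnew. \<forall>j<rnew. i \<noteq> j \<longrightarrow> Snew $$ (i,j) = 0"
       "\<forall>i<rnew. Snew $$ (i,i) > 0"
       "(1\<^sub>m n1 - G * transpose_mat G) * L = Unew * Snew * transpose_mat Vnew"
    and PiS: "PiS = {hcat G Unew * transpose_mat Y1 + Y2 * transpose_mat Vnew | Y1 Y2.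
                     Y1 \<in> carrier_mat n2 (rG + rnew) \<and> Y2 \<in> carrier_mat n1 rnew}"
    and Omega: "\<Omega> = supp S"
    and incoh: "op_norm n1 n2 (\<lambda>X. P_Omega \<Omega> (proj_onto PiS X)) \<le> 1/4"
    and lam: "0 < lam" "lam < 3/10"
    and WFD: "W \<in> carrier_mat n1 n2" "F \<in> carrier_mat n1 n2" "D \<in> carrier_mat n1 n2"
    and cert: "Unew * transpose_mat Vnew + W = lam \<cdot>\<^sub>m (sgn_mat S + F + P_Omega \<Omega> D)"
    and W: "proj_onto PiS W = 0\<^sub>m n1 n2" "spec_norm W \<le> 9/10"
    and F: "P_Omega \<Omega> F = 0\<^sub>m n1 n2" "max_norm F \<le> 9/10"
    and D: "frob_norm (P_Omega \<Omega> D) \<le> 1/4"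
  shows "(let Lnew = (1\<^sub>m n1 - G * transpose_mat G) * L; X0 = transpose_mat L * G;
              feas = (\<lambda>(L', S', X'). L' \<in> carrier_mat n1 n2 \<and> S' \<in> carrier_mat n1 n2
                          \<and> X' \<in> carrier_mat n2 rG \<and> L' + G * transpose_mat X' + S' = M);
              obj = (\<lambda>(L', S', X'). nuc_norm L' + lam * l1_norm S')
          in feas (Lnew, S, X0) \<and>
             (\<forall>L' S' X'. feas (L', S', X') \<longrightarrow>
                 obj (Lnew, S, X0) \<le> obj (L', S', X') \<and>
                 (obj (L', S', X') \<le> obj (Lnew, S, X0) \<longrightarrow> (L', S', X') = (Lnew, S, X0))))"
proof -
  define Lnew where "Lnew = (1\<^sub>m n1 - G * transpose_mat G) * L"
  define X0 where "X0 = transpose_mat L * G"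
  have GG: "transpose_mat G * G = 1\<^sub>m rG" and UU: "transpose_mat Unew * Unew = 1\<^sub>m rnew"
    and VV: "transpose_mat Vnew * Vnew = 1\<^sub>m rnew"
    using G svd unfolding basis_mat_def by auto
  have GU: "transpose_mat G * Unew = 0\<^sub>m rG rnew"
    using compl_proj_svd_orthogonal[OF G(1) GG _ svd(1,2,3) VV svd(6)] svd(7,8) dims
    by (auto simp: less_imp_neq[symmetric])
  note H = hcat_carrier[OF G(1) svd(1)] hcat_orthonormal_cols[OF G(1) svd(1) GG UU GU]
  have PiS_tangent: "PiS = tangent_space (hcat G Unew) Vnew"
    unfolding PiS tangent_space_def using H svd(3) by simp
  interpret rpca_dual_certificate n1 n2 rG rnew lam G Unew Snew Vnew S W F D
  proof (unfold_locales)
    show "frob_norm (P_Omega (supp S) (X - tangent_compl_proj (hcat G Unew) Vnew X)) \<le> 1/4 * frob_norm X"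
      if "X \<in> carrier_mat n1 n2" for X
      using P_Omega_tangent_proj_le[OF H svd(3) VV _ that] incoh unfolding PiS_tangent Omega by blast
    show "transpose_mat (hcat G Unew) * W = 0\<^sub>m (rG + rnew) n2" "W * Vnew = 0\<^sub>m n1 rnew"
      using proj_onto_tangent_space_eq_0[OF H svd(3) VV WFD(1)] W(1) unfolding PiS_tangent by auto
    show "vnorm (W *\<^sub>v v) \<le> 9/10 * vnorm v" if "v \<in> carrier_vec n2" for v
      by (rule spec_norm_bound[OF WFD(1) W(2) that])
  qed (use G(1) GG svd UU VV GU dims WFD lam cert F D Omega in \<open>auto simp: less_imp_le\<close>)
  have X0: "X0 \<in> carrier_mat n2 rG" unfolding X0_def using dims G(1) by auto
  have feasible: "Lnew + G * transpose_mat X0 + S = M"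
    unfolding Lnew_def X0_def M using compl_proj_add_proj[OF G(1), of L n2] dims G(1)
    by (simp add: assoc_add_mat[of _ n1 n2])
  have Lnew: "Lnew = Unew * Snew * transpose_mat Vnew" unfolding Lnew_def by (rule svd(8))
  show ?thesis
    unfolding Let_def Lnew_def[symmetric] X0_def[symmetric] split_beta fst_conv snd_conv
  proof (intro conjI allI impI)
    fix L' S' X' assume "L' \<in> carrier_mat n1 n2 \<and> S' \<in> carrier_mat n1 n2 \<and> X' \<in> carrier_mat n2 rG \<and>
      L' + G * transpose_mat X' + S' = M"
    hence "L' \<in> carrier_mat n1 n2 \<and> S' \<in> carrier_mat n1 n2 \<and> X' \<in> carrier_mat n2 rG \<and>
      L' + G * transpose_mat X' + S' = Unew * Snew * transpose_mat Vnew + G * transpose_mat X0 + S"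
      using feasible Lnew by auto
    note optimal = unique_minimizer[OF X0, rule_format, OF this]
    show "nuc_norm Lnew + lam * l1_norm S \<le> nuc_norm L' + lam * l1_norm S'"
      using optimal unfolding Lnew by blast
    assume "nuc_norm L' + lam * l1_norm S' \<le> nuc_norm Lnew + lam * l1_norm S"
    thus "(L', S', X') = (Lnew, S, X0)" using optimal unfolding Lnew by blast
  qed (use feasible X0 dims Lnew U Sig V in auto)
qed

end
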